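(* Let $X$ and $Y$ be nontrivial real Banach spaces. (a) If $X^*$ has the weak$^*$ diameter $2$ property, then $(X\oplus_1 Y)^*$ has the weak$^*$ diameter $2$ property. (b) If $X^*$ and $Y^*$ have the weak$^*$ diameter $2$ property and $1<p\leq\infty$, then $(X\oplus_p Y)^*$ has the weak$^*$ diameter $2$ property. (c) If $(X\oplus_p Y)^*$ has the weak$^*$ diameter $2$ property, where $1<p\leq\infty$, then $X^*$ has the weak$^*$ diameter $2$ property.
   Context: For $1\le p<\infty$, $X\oplus_p Y$ is $X\times Y$ with norm $(\|x\|^p+\|y\|^p)^{1/p}$; $X\oplus_\infty Y$ has norm $\max\{\|x\|,\|y\|\}$. For a Banach space $Z$, $Z^*$ has the weak$^*$ diameter $2$ property if every nonempty relatively weak$^*$ open subset of the closed unit ball $B_{Z^*}$ has diameter $2$. *)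

theory Defs
  imports "HOL-Analysis.Analysis"
begin

definition psum_norm :: "ereal \<Rightarrow> ('a::real_normed_vector \<times> 'b::real_normed_vector) \<Rightarrow> real" where
  "psum_norm p z =
     (if p = \<infinity> then max (norm (fst z)) (norm (snd z))
      else (norm (fst z) powr real_of_ereal p + norm (snd z) powr real_of_ereal p)
             powr (1 / real_of_ereal p))"

text \<open>For a real vector space with norm N: the closed unit ball of the dual space
  (continuous linear functionals of dual norm at most 1), as a subset of 'v \<Rightarrow> real.\<close>
definition dual_ball :: "('v::real_vector \<Rightarrow> real) \<Rightarrow> ('v \<Rightarrow> real) set" where
  "dual_ball N = {f. linear f \<and> (\<forall>x. \<bar>f x\<bar> \<le> N x)}"

definition dual_norm :: "('v::real_vector \<Rightarrow> real) \<Rightarrow> ('v \<Rightarrow> real) \<Rightarrow> real" where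
  "dual_norm N f = Sup {\<bar>f x\<bar> | x. N x \<le> 1}"

definition dual_diam :: "('v::real_vector \<Rightarrow> real) \<Rightarrow> ('v \<Rightarrow> real) set \<Rightarrow> real" where
  "dual_diam N S = Sup {dual_norm N (f - g) | f g. f \<in> S \<and> g \<in> S}"

text \<open>Weak* diameter 2 property of the dual: the weak* topology on the dual is the
  restriction of the topology of pointwise convergence (product topology on 'v \<Rightarrow> real).\<close>
definition wstar_d2p :: "('v::real_vector \<Rightarrow> real) \<Rightarrow> bool" where
  "wstar_d2p N \<longleftrightarrow>
     (\<forall>U :: ('v \<Rightarrow> real) set. open U \<and> U \<inter> dual_ball N \<noteq> {} \<longrightarrow>
        dual_diam N (U \<inter> dual_ball N) = 2)"

end

theory Submission
  imports Defs
begin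

text \<open>
  A functional on \<open>X \<oplus>\<^sub>p Y\<close> is the sum of its restrictions to the two axes. For (a) and (b)
  choose weights \<open>(\<alpha>, \<beta>)\<close> that dominate the norms of the two restrictions and norm the
  two-dimensional \<open>\<ell>\<^sub>p\<close>-norm at some \<open>(s, t)\<close> (for \<open>p = 1\<close> one can take \<open>t = 0\<close>, so nothing is
  needed from \<open>Y\<close>). Perturbing the two normalised restrictions inside their weak* neighbourhoods
  by pairs of functionals almost \<open>2\<close> apart and recombining them with the weights gives functionals
  on the sum that are almost \<open>2\<close> apart at \<open>(s z\<^sub>1, t z\<^sub>2)\<close>.

  For (c), \<open>p > 1\<close> makes a functional of norm at most one that almost attains the value \<open>1\<close> on
  \<open>X \<times> 0\<close> small on \<open>0 \<times> Y\<close>. So if the weak* neighbourhood of \<open>f0\<close> contains a functional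
  almost norming a unit vector, the restrictions to \<open>X\<close> of two far-apart functionals near its lift
  do the job. Such a functional exists: otherwise all functionals near \<open>f0\<close> have norm at most
  \<open>1 - \<theta>\<close>, which forces every functional that is small on the finitely many points defining
  the neighbourhood to be small everywhere; this contradicts the property of the sum near the lift
  of a functional norming \<open>x0 \<noteq> 0\<close>, obtained from the Hahn--Banach theorem.
\<close>

section \<open>Weak* neighbourhoods and the diameter two property\<close>

definition wstar_nbhd :: "'v set \<Rightarrow> real \<Rightarrow> ('v \<Rightarrow> real) \<Rightarrow> ('v \<Rightarrow> real) set" where
  "wstar_nbhd F e f0 = {f. \<forall>x\<in>F. \<bar>f x - f0 x\<bar> < e}"

lemma open_wstar_nbhd:
  fixes f0 :: "'a \<Rightarrow> real"
  assumes "finite F"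
  shows "open (wstar_nbhd F e f0)"
proof -
  have ball: "{y. \<bar>y - c\<bar> < e} = ball c e" for c :: real
    by (auto simp: dist_real_def abs_minus_commute)
  have "open {f::'a \<Rightarrow> real. \<forall>x\<in>F. f (id x) \<in> {y. \<bar>y - f0 x\<bar> < e}}"
    by (rule product_topology_basis') (auto simp only: ball intro: assms)
  then show ?thesis
    by (simp add: wstar_nbhd_def)
qed

lemma wstar_nbhd_subset_open:
  fixes U :: "('a \<Rightarrow> real) set"
  assumes "open U" "f0 \<in> U"
  obtains F e where "finite F" "0 < e" "wstar_nbhd F e f0 \<subseteq> U"
proof -
  have "openin (product_topology (\<lambda>i. euclidean) UNIV) U"
    using assms(1) unfolding open_fun_def by auto
  from product_topology_open_contains_basis[OF this assms(2)]
  obtain X where X: "f0 \<in> Pi\<^sub>E UNIV X" "\<And>i. open (X i)" "finite {i. X i \<noteq> UNIV}" "Pi\<^sub>E UNIV X \<subseteq> U"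
    by auto
  define F where "F = {i. X i \<noteq> UNIV}"
  have "\<forall>i. \<exists>r>0. ball (f0 i) r \<subseteq> X i"
    using X(1,2) open_contains_ball by (metis PiE_E UNIV_I)
  then obtain r where r: "\<And>i. 0 < r i" "\<And>i. ball (f0 i) (r i) \<subseteq> X i"
    by metis
  define e where "e = Min (insert 1 (r ` F))"
  have F: "finite F"
    using X(3) by (simp add: F_def)
  have e: "0 < e"
    unfolding e_def using F r(1) by (subst Min_gr_iff) auto
  have "wstar_nbhd F e f0 \<subseteq> Pi\<^sub>E UNIV X"
  proof
    fix f assume f: "f \<in> wstar_nbhd F e f0"
    have "f i \<in> X i" for i
    proof (cases "i \<in> F")
      case True
      then have "e \<le> r i"
        unfolding e_def using F by (intro Min_le) auto
      with f True have "f i \<in> ball (f0 i) (r i)"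
        by (auto simp: wstar_nbhd_def dist_real_def abs_minus_commute)
      then show ?thesis
        using r(2) by blast
    qed (simp add: F_def)
    then show "f \<in> Pi\<^sub>E UNIV X"
      by auto
  qed
  then show ?thesis
    using F e X(4) that by (meson subset_trans)
qed

lemma wstar_nbhd_shrink:
  assumes "f \<in> wstar_nbhd F e f0" "finite F"
  obtains e' where "0 < e'" "wstar_nbhd F e' f \<subseteq> wstar_nbhd F e f0"
proof -
  define e' where "e' = Min (insert 1 ((\<lambda>x. e - \<bar>f x - f0 x\<bar>) ` F))"
  have "0 < e'"
    using assms by (simp add: e'_def wstar_nbhd_def)
  moreover have "wstar_nbhd F e' f \<subseteq> wstar_nbhd F e f0"
  proof
    fix g assume g: "g \<in> wstar_nbhd F e' f"
    have "\<bar>g x - f0 x\<bar> < e" if "x \<in> F" for x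
    proof -
      have "e' \<le> e - \<bar>f x - f0 x\<bar>"
        using assms(2) that by (simp add: e'_def)
      with g that show ?thesis
        by (auto simp: wstar_nbhd_def)
    qed
    then show "g \<in> wstar_nbhd F e f0"
      by (simp add: wstar_nbhd_def)
  qed
  ultimately show ?thesis
    by (rule that)
qed

lemma less_dual_norm_iff:
  assumes "N 0 \<le> 1" and bounded: "\<And>x. N x \<le> 1 \<Longrightarrow> \<bar>h x\<bar> \<le> C"
  shows "r < dual_norm N h \<longleftrightarrow> (\<exists>z. N z \<le> 1 \<and> r < \<bar>h z\<bar>)"
  unfolding dual_norm_def using assms
  by (subst less_cSup_iff) (auto intro!: bdd_aboveI[where M = C])

lemma dual_ball_abs_diff_le_2:
  assumes "f \<in> dual_ball N" "g \<in> dual_ball N" "N x \<le> 1"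
  shows "\<bar>f x - g x\<bar> \<le> 2"
proof -
  have "\<bar>f x\<bar> \<le> N x" "\<bar>g x\<bar> \<le> N x"
    using assms(1,2) by (simp_all add: dual_ball_def)
  then show ?thesis
    using abs_triangle_ineq4[of "f x" "g x"] assms(3) by linarith
qed

lemma dual_norm_diff_le_2:
  assumes "N 0 = 0" "f \<in> dual_ball N" "g \<in> dual_ball N"
  shows "dual_norm N (f - g) \<le> 2"
  unfolding dual_norm_def
proof (rule cSup_least)
  show "{\<bar>(f - g) x\<bar> |x. N x \<le> 1} \<noteq> {}"
    using assms(1) by (auto intro: exI[of _ 0])
  show "s \<le> 2" if "s \<in> {\<bar>(f - g) x\<bar> |x. N x \<le> 1}" for s
    using that assms(2,3) dual_ball_abs_diff_le_2 by fastforce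
qed

lemma dual_diam_eq_2_iff:
  assumes N0: "N 0 = 0" and S: "S \<subseteq> dual_ball N" "S \<noteq> {}"
  shows "dual_diam N S = 2 \<longleftrightarrow>
    (\<forall>\<eta>>0. \<exists>f1\<in>S. \<exists>f2\<in>S. \<exists>z. N z \<le> 1 \<and> 2 - \<eta> < f1 z - f2 z)"
proof -
  let ?D = "{dual_norm N (f - g) |f g. f \<in> S \<and> g \<in> S}"
  have le2: "\<And>d. d \<in> ?D \<Longrightarrow> d \<le> 2"
    using S(1) dual_norm_diff_le_2[of N, OF N0] by blast
  have D: "?D \<noteq> {}" "bdd_above ?D"
    using S(2) le2 by (auto intro!: bdd_aboveI[where M = 2])
  have diff: "r < dual_norm N (f - g) \<longleftrightarrow> (\<exists>z. N z \<le> 1 \<and> r < \<bar>f z - g z\<bar>)"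
    if "f \<in> S" "g \<in> S" for f g r
  proof -
    have "\<bar>(f - g) x\<bar> \<le> 2" if "N x \<le> 1" for x
      using dual_ball_abs_diff_le_2[of f N g x] that \<open>f \<in> S\<close> \<open>g \<in> S\<close> S(1) by auto
    then show ?thesis
      using less_dual_norm_iff[of N "f - g" 2 r] N0 by simp
  qed
  have unsigned: "r < \<bar>a - b\<bar> \<longleftrightarrow> r < a - b \<or> r < b - a" for r a b :: real
    by (auto simp: abs_if)
  have near: "2 - \<eta> < Sup ?D \<longleftrightarrow> (\<exists>f1\<in>S. \<exists>f2\<in>S. \<exists>z. N z \<le> 1 \<and> 2 - \<eta> < f1 z - f2 z)" for \<eta>
  proof -
    have "2 - \<eta> < Sup ?D \<longleftrightarrow> (\<exists>f\<in>S. \<exists>g\<in>S. 2 - \<eta> < dual_norm N (f - g))"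
      by (subst less_cSup_iff[OF D]) blast
    also have "\<dots> \<longleftrightarrow> (\<exists>f\<in>S. \<exists>g\<in>S. \<exists>z. N z \<le> 1 \<and> 2 - \<eta> < \<bar>f z - g z\<bar>)"
      using diff by blast
    also have "\<dots> \<longleftrightarrow> (\<exists>f1\<in>S. \<exists>f2\<in>S. \<exists>z. N z \<le> 1 \<and> 2 - \<eta> < f1 z - f2 z)"
      unfolding unsigned by blast
    finally show ?thesis .
  qed
  have "Sup ?D \<le> 2"
    using D(1) le2 by (rule cSup_least)
  then have "Sup ?D = 2 \<longleftrightarrow> (\<forall>\<eta>>0. 2 - \<eta> < Sup ?D)"
  proof (intro iffI allI impI)
    assume close: "\<forall>\<eta>>0. 2 - \<eta> < Sup ?D"
    have "2 \<le> Sup ?D"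
    proof (rule field_le_epsilon)
      fix \<eta> :: real assume "0 < \<eta>"
      with close show "2 \<le> Sup ?D + \<eta>"
        by force
    qed
    with \<open>Sup ?D \<le> 2\<close> show "Sup ?D = 2"
      by linarith
  qed simp
  then show ?thesis
    unfolding dual_diam_def near by blast
qed

lemma wstar_d2pI:
  assumes N0: "N 0 = 0"
    and witness: "\<And>f0 F e \<eta>. f0 \<in> dual_ball N \<Longrightarrow> finite F \<Longrightarrow> 0 < e \<Longrightarrow> 0 < \<eta> \<Longrightarrow>
      \<exists>f1\<in>wstar_nbhd F e f0 \<inter> dual_ball N. \<exists>f2\<in>wstar_nbhd F e f0 \<inter> dual_ball N.
        \<exists>z. N z \<le> 1 \<and> 2 - \<eta> < f1 z - f2 z"
  shows "wstar_d2p N"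
  unfolding wstar_d2p_def
proof (intro allI impI)
  fix U :: "('a \<Rightarrow> real) set"
  assume "open U \<and> U \<inter> dual_ball N \<noteq> {}"
  then obtain f0 where U: "open U" and f0: "f0 \<in> U" "f0 \<in> dual_ball N"
    by auto
  obtain F e where "finite F" "0 < e" "wstar_nbhd F e f0 \<subseteq> U"
    using wstar_nbhd_subset_open[OF U f0(1)] .
  note witness[OF f0(2) this(1,2)]
  with \<open>wstar_nbhd F e f0 \<subseteq> U\<close> have "\<forall>\<eta>>0. \<exists>f1\<in>U \<inter> dual_ball N. \<exists>f2\<in>U \<inter> dual_ball N.
      \<exists>z. N z \<le> 1 \<and> 2 - \<eta> < f1 z - f2 z"
    by blast
  moreover have "U \<inter> dual_ball N \<subseteq> dual_ball N" "U \<inter> dual_ball N \<noteq> {}"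
    using f0 by auto
  ultimately show "dual_diam N (U \<inter> dual_ball N) = 2"
    using dual_diam_eq_2_iff[of N, OF N0] by blast
qed

lemma wstar_d2pD:
  assumes "wstar_d2p N" "N 0 = 0" "f0 \<in> dual_ball N" "finite F" "0 < e" "0 < \<eta>"
  shows "\<exists>f1\<in>wstar_nbhd F e f0 \<inter> dual_ball N. \<exists>f2\<in>wstar_nbhd F e f0 \<inter> dual_ball N.
    \<exists>z. N z \<le> 1 \<and> 2 - \<eta> < f1 z - f2 z"
proof -
  have "f0 \<in> wstar_nbhd F e f0"
    using assms(5) by (simp add: wstar_nbhd_def)
  then have "dual_diam N (wstar_nbhd F e f0 \<inter> dual_ball N) = 2"
    using assms(1,3,4) open_wstar_nbhd unfolding wstar_d2p_def by blast
  moreover have "wstar_nbhd F e f0 \<inter> dual_ball N \<noteq> {}"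
    using assms(3) \<open>f0 \<in> wstar_nbhd F e f0\<close> by blast
  ultimately show ?thesis
    using dual_diam_eq_2_iff[of N, OF assms(2) Int_lower2] assms(6) by blast
qed

lemma abs_le_of_unit_ball:
  fixes h :: "'a::real_normed_vector \<Rightarrow> real"
  assumes "linear h" and unit: "\<And>x. norm x \<le> 1 \<Longrightarrow> h x \<le> c"
  shows "\<bar>h x\<bar> \<le> c * norm x"
proof (cases "x = 0")
  case True
  then show ?thesis
    using linear_0[OF assms(1)] by simp
next
  case False
  define u where "u = x /\<^sub>R norm x"
  have "norm u = 1" "norm (- u) = 1"
    using False by (simp_all add: u_def)
  then have "h u \<le> c" "h (- u) \<le> c"
    using unit by simp_all
  moreover have "h u = h x / norm x" "h (- u) = - h x / norm x"
    using linear_scale[OF assms(1)] linear_neg[OF assms(1)] by (simp_all add: u_def divide_inverse_commute)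
  ultimately have "\<bar>h x\<bar> / norm x \<le> c"
    by (simp add: abs_if)
  then show ?thesis
    using False by (simp add: divide_le_eq mult.commute)
qed

lemma onorm_le_of_unit_ball:
  fixes h :: "'a::real_normed_vector \<Rightarrow> real"
  assumes "linear h" "\<And>x. norm x \<le> 1 \<Longrightarrow> h x \<le> c"
  shows "onorm h \<le> c"
proof (rule onorm_bound)
  show "0 \<le> c"
    using assms(2)[of 0] linear_0[OF assms(1)] by simp
  show "norm (h x) \<le> c * norm x" for x
    using abs_le_of_unit_ball[OF assms] by simp
qed

lemma exists_unit_gt_onorm_diff:
  fixes h :: "'a::real_normed_vector \<Rightarrow> real"
  assumes "linear h" "0 < \<delta>"
  obtains x where "norm x \<le> 1" "onorm h - \<delta> < h x"
  using onorm_le_of_unit_ball[OF assms(1), of "onorm h - \<delta>"] assms(2) by force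

lemma dual_ball_norm_iff:
  "f \<in> dual_ball norm \<longleftrightarrow> bounded_linear f \<and> onorm f \<le> 1"
proof
  assume f: "f \<in> dual_ball norm"
  then have "linear f" "\<And>x. \<bar>f x\<bar> \<le> norm x"
    by (simp_all add: dual_ball_def)
  then have "bounded_linear f"
    by (intro bounded_linear_intro[where K = 1]) (simp_all add: linear_add linear_scale)
  moreover have "onorm f \<le> 1"
    using \<open>\<And>x. \<bar>f x\<bar> \<le> norm x\<close> by (intro onorm_bound) simp_all
  ultimately show "bounded_linear f \<and> onorm f \<le> 1" ..
next
  assume f: "bounded_linear f \<and> onorm f \<le> 1"
  have "\<bar>f x\<bar> \<le> norm x" for x
    using onorm[of f x] f mult_right_mono[of "onorm f" 1 "norm x"] by simp
  with f show "f \<in> dual_ball norm"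
    by (simp add: dual_ball_def bounded_linear.linear)
qed

lemma abs_le_of_onorm_le:
  assumes "f \<in> dual_ball norm" "onorm f \<le> c"
  shows "\<bar>f x\<bar> \<le> c * norm x"
proof -
  have "\<bar>f x\<bar> \<le> onorm f * norm x"
    using onorm[of f x] assms(1) by (simp add: dual_ball_norm_iff)
  also have "\<dots> \<le> c * norm x"
    using assms(2) by (simp add: mult_right_mono)
  finally show ?thesis .
qed

lemma continuous_on_onorm_add_scaled:
  fixes f g :: "'a::real_normed_vector \<Rightarrow> real"
  assumes "bounded_linear f" "bounded_linear g"
  shows "continuous_on S (\<lambda>c. onorm (\<lambda>x. f x + c * g x))"
proof (rule lipschitz_on_continuous_on[where L = "onorm g"], rule lipschitz_onI)
  have lin: "bounded_linear (\<lambda>x. f x + c * g x)" for c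
    by (rule bounded_linear_add[OF assms(1) bounded_linear_const_mult[OF assms(2)]])
  have le: "onorm (\<lambda>x. f x + c * g x) \<le> onorm (\<lambda>x. f x + c' * g x) + \<bar>c - c'\<bar> * onorm g" for c c'
  proof -
    have "onorm (\<lambda>x. f x + c * g x) = onorm (\<lambda>x. (f x + c' * g x) + (c - c') *\<^sub>R g x)"
      by (simp add: algebra_simps)
    also have "\<dots> \<le> onorm (\<lambda>x. f x + c' * g x) + onorm (\<lambda>x. (c - c') *\<^sub>R g x)"
      using lin assms(2) by (intro onorm_triangle bounded_linear_const_scaleR)
    finally show ?thesis
      using onorm_scaleR[OF assms(2)] by simp
  qed
  show "dist (onorm (\<lambda>x. f x + c * g x)) (onorm (\<lambda>x. f x + c' * g x)) \<le> onorm g * dist c c'" for c c'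
    using le[of c c'] le[of c' c] by (simp add: dist_real_def abs_minus_commute abs_le_iff mult.commute)
  show "0 \<le> onorm g"
    using onorm_pos_le[OF assms(2)] .
qed

section \<open>The \<open>p\<close>-sum of two normed spaces\<close>

lemma psum_norm_infinity [simp]: "psum_norm \<infinity> (x, y) = max (norm x) (norm y)"
  by (simp add: psum_norm_def)

lemma psum_norm_real:
  "p \<noteq> \<infinity> \<Longrightarrow> psum_norm p (x, y) =
     (norm x powr real_of_ereal p + norm y powr real_of_ereal p) powr (1 / real_of_ereal p)"
  by (simp add: psum_norm_def)

lemma psum_norm_one [simp]: "psum_norm 1 (x, y) = norm x + norm y"
  by (simp add: psum_norm_def)

lemma psum_norm_swap: "psum_norm p (y, x) = psum_norm p (x, y)"
  by (simp add: psum_norm_def max.commute add.commute)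

lemma real_of_ereal_ge_1: "1 \<le> p \<Longrightarrow> p \<noteq> \<infinity> \<Longrightarrow> 1 \<le> real_of_ereal p"
  by (cases p) auto

lemma norm_le_psum_norm:
  assumes "1 \<le> p"
  shows "norm x \<le> psum_norm p (x, y)"
proof (cases "p = \<infinity>")
  case False
  define r where "r = real_of_ereal p"
  have "1 \<le> r"
    using real_of_ereal_ge_1[OF assms False] by (simp add: r_def)
  then have "norm x = (norm x powr r) powr (1 / r)"
    by (simp add: powr_powr)
  also have "\<dots> \<le> (norm x powr r + norm y powr r) powr (1 / r)"
    using \<open>1 \<le> r\<close> by (intro powr_mono2) auto
  finally show ?thesis
    using False by (simp add: psum_norm_real r_def)
qed simp

lemma norm_le_psum_norm': "1 \<le> p \<Longrightarrow> norm y \<le> psum_norm p (x, y)"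
  by (subst psum_norm_swap) (rule norm_le_psum_norm)

lemma psum_norm_axis:
  assumes "1 \<le> p"
  shows "psum_norm p (x, 0) = norm x"
proof (cases "p = \<infinity>")
  case False
  then have "1 \<le> real_of_ereal p"
    using real_of_ereal_ge_1[OF assms] by simp
  with False show ?thesis
    by (simp add: psum_norm_real powr_powr)
qed simp

lemma psum_norm_axis': "1 \<le> p \<Longrightarrow> psum_norm p (0, y) = norm y"
  by (subst psum_norm_swap) (rule psum_norm_axis)

lemma psum_norm_zero: "1 \<le> p \<Longrightarrow> psum_norm p 0 = 0"
  by (subst zero_prod_def) (simp add: psum_norm_axis)

lemma psum_norm_mono:
  assumes "1 \<le> p" "norm x \<le> norm x'" "norm y \<le> norm y'"
  shows "psum_norm p (x, y) \<le> psum_norm p (x', y')"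
proof (cases "p = \<infinity>")
  case False
  define r where "r = real_of_ereal p"
  have "1 \<le> r"
    using real_of_ereal_ge_1[OF assms(1) False] by (simp add: r_def)
  have "norm x powr r + norm y powr r \<le> norm x' powr r + norm y' powr r"
    using assms(2,3) \<open>1 \<le> r\<close> by (intro add_mono powr_mono2) auto
  then show ?thesis
    using False \<open>1 \<le> r\<close> by (simp add: psum_norm_real r_def[symmetric] powr_mono2)
qed (use assms in \<open>auto simp: max_def\<close>)

lemma psum_norm_rectangle:
  assumes "1 \<le> p" "0 \<le> s" "0 \<le> t" "norm x \<le> 1" "norm y \<le> 1"
  shows "psum_norm p (s *\<^sub>R x, t *\<^sub>R y) \<le> psum_norm p (s, t)"
  using assms by (intro psum_norm_mono) (auto simp: mult_left_le)

lemma linear_pair_split: "linear \<Phi> \<Longrightarrow> \<Phi> (x, y) = \<Phi> (x, 0) + \<Phi> (0, y)"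
  using linear_add[of \<Phi> "(x, 0)" "(0, y)"] by simp

lemma linear_on_fst_axis: "linear \<Phi> \<Longrightarrow> linear (\<lambda>x. \<Phi> (x, 0))"
  by (rule linear_compose[of "\<lambda>x. (x, 0)", unfolded o_def]) (auto intro: linearI)

lemma linear_on_snd_axis: "linear \<Phi> \<Longrightarrow> linear (\<lambda>y. \<Phi> (0, y))"
  by (rule linear_compose[of "\<lambda>y. (0, y)", unfolded o_def]) (auto intro: linearI)

lemma dual_ball_psum_fst_axis:
  assumes "1 \<le> p" "\<Phi> \<in> dual_ball (psum_norm p)"
  shows "(\<lambda>x. \<Phi> (x, 0)) \<in> dual_ball norm"
proof -
  have "linear \<Phi>" and bound: "\<And>w. \<bar>\<Phi> w\<bar> \<le> psum_norm p w"
    using assms(2) unfolding dual_ball_def by blast+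
  have "\<bar>\<Phi> (x, 0)\<bar> \<le> norm x" for x
    using bound[of "(x, 0)"] by (simp add: psum_norm_axis[OF assms(1)])
  with linear_on_fst_axis[OF \<open>linear \<Phi>\<close>] show ?thesis
    by (simp add: dual_ball_def)
qed

lemma dual_ball_psum_snd_axis:
  assumes "1 \<le> p" "\<Phi> \<in> dual_ball (psum_norm p)"
  shows "(\<lambda>y. \<Phi> (0, y)) \<in> dual_ball norm"
proof -
  have "linear \<Phi>" and bound: "\<And>w. \<bar>\<Phi> w\<bar> \<le> psum_norm p w"
    using assms(2) unfolding dual_ball_def by blast+
  have "\<bar>\<Phi> (0, y)\<bar> \<le> norm y" for y
    using bound[of "(0, y)"] by (simp add: psum_norm_axis'[OF assms(1)])
  with linear_on_snd_axis[OF \<open>linear \<Phi>\<close>] show ?thesis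
    by (simp add: dual_ball_def)
qed

lemma dual_ball_psum_lift:
  assumes "1 \<le> p" "f \<in> dual_ball norm"
  shows "(\<lambda>w. f (fst w)) \<in> dual_ball (psum_norm p :: 'a::real_normed_vector \<times> 'b::real_normed_vector \<Rightarrow> real)"
proof -
  have "linear f" and bound: "\<And>x. \<bar>f x\<bar> \<le> norm x"
    using assms(2) unfolding dual_ball_def by blast+
  have "\<bar>f (fst w)\<bar> \<le> psum_norm p w" for w :: "'a \<times> 'b"
    using bound[of "fst w"] norm_le_psum_norm[OF assms(1), of "fst w" "snd w"] by simp
  moreover have "linear (\<lambda>w::'a \<times> 'b. f (fst w))"
    using linear_compose[OF linear_fst \<open>linear f\<close>] by (simp add: o_def)
  ultimately show ?thesis
    unfolding dual_ball_def mem_Collect_eq by blast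
qed

lemma weighted_sum_in_dual_ball:
  fixes f :: "'a::real_normed_vector \<Rightarrow> real" and g :: "'b::real_normed_vector \<Rightarrow> real"
  assumes "f \<in> dual_ball norm" "g \<in> dual_ball norm" "0 \<le> \<alpha>" "0 \<le> \<beta>"
    and dominated: "\<And>x y. \<alpha> * norm x + \<beta> * norm y \<le> N (x, y)"
  shows "(\<lambda>w. \<alpha> * f (fst w) + \<beta> * g (snd w)) \<in> dual_ball N"
proof -
  have "linear f" "linear g" "\<And>x. \<bar>f x\<bar> \<le> norm x" "\<And>y. \<bar>g y\<bar> \<le> norm y"
    using assms(1,2) unfolding dual_ball_def by blast+
  have "linear (\<lambda>w. \<alpha> * f (fst w) + \<beta> * g (snd w))"
    using \<open>linear f\<close> \<open>linear g\<close> by (auto simp: linear_iff algebra_simps)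
  moreover have "\<bar>\<alpha> * f (fst w) + \<beta> * g (snd w)\<bar> \<le> N w" for w
  proof -
    have "\<bar>\<alpha> * f (fst w) + \<beta> * g (snd w)\<bar> \<le> \<bar>\<alpha> * f (fst w)\<bar> + \<bar>\<beta> * g (snd w)\<bar>"
      by (rule abs_triangle_ineq)
    also have "\<dots> = \<alpha> * \<bar>f (fst w)\<bar> + \<beta> * \<bar>g (snd w)\<bar>"
      using assms(3,4) by (simp add: abs_mult)
    also have "\<dots> \<le> \<alpha> * norm (fst w) + \<beta> * norm (snd w)"
      using \<open>\<And>x. \<bar>f x\<bar> \<le> norm x\<close> \<open>\<And>y. \<bar>g y\<bar> \<le> norm y\<close> assms(3,4)
      by (intro add_mono mult_left_mono) auto
    also have "\<dots> \<le> N w"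
      using dominated[of "fst w" "snd w"] by simp
    finally show ?thesis .
  qed
  ultimately show ?thesis
    unfolding dual_ball_def mem_Collect_eq by blast
qed

section \<open>The diameter two property passes to \<open>p\<close>-sums\<close>

text \<open>\<open>(\<alpha>, \<beta>)\<close> is a norm-one functional for the norm that \<open>N\<close> induces on the pairs
  \<open>(norm x, norm y)\<close>, and it attains its norm at \<open>(s, t)\<close>.\<close>

definition norming_weights ::
    "('a::real_normed_vector \<times> 'b::real_normed_vector \<Rightarrow> real) \<Rightarrow> real \<Rightarrow> real \<Rightarrow> real \<Rightarrow> real \<Rightarrow> bool"
  where "norming_weights N \<alpha> \<beta> s t \<longleftrightarrow>
    0 \<le> \<alpha> \<and> 0 \<le> \<beta> \<and> 0 \<le> s \<and> 0 \<le> t \<and> \<alpha> * s + \<beta> * t = 1 \<and>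
    (\<forall>x y. \<alpha> * norm x + \<beta> * norm y \<le> N (x, y)) \<and>
    (\<forall>x y. norm x \<le> 1 \<longrightarrow> norm y \<le> 1 \<longrightarrow> N (s *\<^sub>R x, t *\<^sub>R y) \<le> 1)"

lemma obtain_dual_ball_factor:
  fixes h :: "'a::real_normed_vector \<Rightarrow> real"
  assumes "linear h" "0 \<le> \<alpha>" "\<And>x. \<bar>h x\<bar> \<le> \<alpha> * norm x"
  obtains f where "f \<in> dual_ball norm" "\<And>x. h x = \<alpha> * f x"
proof (cases "\<alpha> = 0")
  case True
  then have "h x = \<alpha> * 0" for x
    using assms(3)[of x] by simp
  then show ?thesis
    by (rule that[rotated]) (simp add: dual_ball_def linear_zero)
next
  case False
  have "linear (\<lambda>x. h x / \<alpha>)"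
    using assms(1) unfolding linear_iff by (simp add: add_divide_distrib)
  moreover have "\<bar>h x / \<alpha>\<bar> \<le> norm x" for x
    using assms(3)[of x] assms(2) False by (simp add: divide_le_eq mult.commute)
  ultimately have "(\<lambda>x. h x / \<alpha>) \<in> dual_ball norm"
    by (simp add: dual_ball_def)
  moreover have "h x = \<alpha> * (h x / \<alpha>)" for x
    using False by simp
  ultimately show ?thesis
    by (rule that)
qed

lemma weighted_sum_in_wstar_nbhd:
  assumes "f \<in> wstar_nbhd (fst ` F) e f0" "g \<in> wstar_nbhd (snd ` F) e g0" "0 \<le> \<alpha>" "0 \<le> \<beta>"
  shows "(\<lambda>w. \<alpha> * f (fst w) + \<beta> * g (snd w))
    \<in> wstar_nbhd F ((\<alpha> + \<beta> + 1) * e) (\<lambda>w. \<alpha> * f0 (fst w) + \<beta> * g0 (snd w))"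
  unfolding wstar_nbhd_def
proof (intro CollectI ballI)
  fix w assume "w \<in> F"
  then have close: "\<bar>f (fst w) - f0 (fst w)\<bar> < e" "\<bar>g (snd w) - g0 (snd w)\<bar> < e"
    using assms(1,2) by (auto simp: wstar_nbhd_def)
  have "\<bar>\<alpha> * f (fst w) + \<beta> * g (snd w) - (\<alpha> * f0 (fst w) + \<beta> * g0 (snd w))\<bar>
      \<le> \<bar>\<alpha> * (f (fst w) - f0 (fst w))\<bar> + \<bar>\<beta> * (g (snd w) - g0 (snd w))\<bar>"
    by (rule order_trans[OF _ abs_triangle_ineq]) (simp add: algebra_simps)
  also have "\<dots> \<le> \<alpha> * e + \<beta> * e"
    using close assms(3,4) by (simp add: abs_mult) (intro add_mono mult_left_mono; simp)
  also have "\<dots> < (\<alpha> + \<beta> + 1) * e"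
    using close by (simp add: algebra_simps)
  finally show "\<bar>\<alpha> * f (fst w) + \<beta> * g (snd w) - (\<alpha> * f0 (fst w) + \<beta> * g0 (snd w))\<bar>
      < (\<alpha> + \<beta> + 1) * e" .
qed

lemma wstar_d2p_scaled_witness:
  fixes g0 :: "'a::real_normed_vector \<Rightarrow> real"
  assumes d2p: "0 < t \<Longrightarrow> wstar_d2p (norm :: 'a \<Rightarrow> real)" and "0 \<le> t"
    and g0: "g0 \<in> dual_ball norm" and "finite F" "0 < e" "0 < \<eta>"
  obtains g1 g2 z where "g1 \<in> wstar_nbhd F e g0 \<inter> dual_ball norm"
    "g2 \<in> wstar_nbhd F e g0 \<inter> dual_ball norm" "norm z \<le> 1" "t * (2 - \<eta>) \<le> t * (g1 z - g2 z)"
proof (cases "t = 0")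
  case True
  have g0': "g0 \<in> wstar_nbhd F e g0 \<inter> dual_ball norm"
    using g0 \<open>0 < e\<close> by (simp add: wstar_nbhd_def)
  show ?thesis
    by (rule that[OF g0' g0', of 0]) (simp_all add: True)
next
  case False
  with \<open>0 \<le> t\<close> have "0 < t"
    by simp
  have "\<exists>g1\<in>wstar_nbhd F e g0 \<inter> dual_ball norm. \<exists>g2\<in>wstar_nbhd F e g0 \<inter> dual_ball norm.
      \<exists>z. norm z \<le> 1 \<and> 2 - \<eta> < g1 z - g2 z"
    by (rule wstar_d2pD[OF d2p[OF \<open>0 < t\<close>] _ g0 assms(4-6)]) simp
  then obtain g1 g2 z where g: "g1 \<in> wstar_nbhd F e g0 \<inter> dual_ball norm"
    "g2 \<in> wstar_nbhd F e g0 \<inter> dual_ball norm" "norm z \<le> 1" "2 - \<eta> < g1 z - g2 z"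
    by blast
  from g(4) \<open>0 \<le> t\<close> have "t * (2 - \<eta>) \<le> t * (g1 z - g2 z)"
    by (simp add: mult_left_mono)
  with g(1-3) show ?thesis
    by (rule that)
qed

lemma obtain_weighted_axis_factors:
  fixes \<Phi>0 :: "'a::real_normed_vector \<times> 'b::real_normed_vector \<Rightarrow> real"
  assumes "linear \<Phi>0" "0 \<le> \<alpha>" "0 \<le> \<beta>"
    and "\<And>x. \<bar>\<Phi>0 (x, 0)\<bar> \<le> \<alpha> * norm x" "\<And>y. \<bar>\<Phi>0 (0, y)\<bar> \<le> \<beta> * norm y"
  obtains f0 g0 where "f0 \<in> dual_ball norm" "g0 \<in> dual_ball norm"
    "\<Phi>0 = (\<lambda>w. \<alpha> * f0 (fst w) + \<beta> * g0 (snd w))"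
proof -
  obtain f0 where f0: "f0 \<in> dual_ball norm" "\<And>x. \<Phi>0 (x, 0) = \<alpha> * f0 x"
    using obtain_dual_ball_factor[OF linear_on_fst_axis[OF assms(1)] assms(2,4)] by blast
  obtain g0 where g0: "g0 \<in> dual_ball norm" "\<And>y. \<Phi>0 (0, y) = \<beta> * g0 y"
    using obtain_dual_ball_factor[OF linear_on_snd_axis[OF assms(1)] assms(3,5)] by blast
  have "\<Phi>0 = (\<lambda>w. \<alpha> * f0 (fst w) + \<beta> * g0 (snd w))"
  proof
    fix w :: "'a \<times> 'b"
    show "\<Phi>0 w = \<alpha> * f0 (fst w) + \<beta> * g0 (snd w)"
      using linear_pair_split[OF assms(1), of "fst w" "snd w"] by (simp add: f0(2) g0(2))
  qed
  then show ?thesis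
    by (rule that[OF f0(1) g0(1)])
qed

text \<open>The two normalised restrictions of \<open>\<Phi>0\<close> are perturbed separately and recombined with the
  weights; the separating point is \<open>(s z\<^sub>1, t z\<^sub>2)\<close>.\<close>

lemma wstar_d2p_witness_of_norming_weights:
  fixes \<Phi>0 :: "'a::real_normed_vector \<times> 'b::real_normed_vector \<Rightarrow> real"
  assumes dX: "0 < s \<Longrightarrow> wstar_d2p (norm :: 'a \<Rightarrow> real)"
    and dY: "0 < t \<Longrightarrow> wstar_d2p (norm :: 'b \<Rightarrow> real)"
    and weights: "norming_weights N \<alpha> \<beta> s t"
    and \<Phi>0: "linear \<Phi>0" "\<And>x. \<bar>\<Phi>0 (x, 0)\<bar> \<le> \<alpha> * norm x" "\<And>y. \<bar>\<Phi>0 (0, y)\<bar> \<le> \<beta> * norm y"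
    and "finite F" "0 < e" "0 < \<eta>"
  shows "\<exists>\<Phi>1\<in>wstar_nbhd F e \<Phi>0 \<inter> dual_ball N. \<exists>\<Phi>2\<in>wstar_nbhd F e \<Phi>0 \<inter> dual_ball N.
    \<exists>z. N z \<le> 1 \<and> 2 - \<eta> < \<Phi>1 z - \<Phi>2 z"
proof -
  have w: "0 \<le> \<alpha>" "0 \<le> \<beta>" "0 \<le> s" "0 \<le> t" "\<alpha> * s + \<beta> * t = 1"
    and dominated: "\<And>x y. \<alpha> * norm x + \<beta> * norm y \<le> N (x, y)"
    and rectangle: "\<And>x y. norm x \<le> 1 \<Longrightarrow> norm y \<le> 1 \<Longrightarrow> N (s *\<^sub>R x, t *\<^sub>R y) \<le> 1"
    using weights unfolding norming_weights_def by blast+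
  define \<Phi> :: "('a \<Rightarrow> real) \<Rightarrow> ('b \<Rightarrow> real) \<Rightarrow> 'a \<times> 'b \<Rightarrow> real"
    where "\<Phi> f g = (\<lambda>w. \<alpha> * f (fst w) + \<beta> * g (snd w))" for f g
  obtain f0 g0 where f0: "f0 \<in> dual_ball norm" and g0: "g0 \<in> dual_ball norm" and "\<Phi>0 = \<Phi> f0 g0"
    using obtain_weighted_axis_factors[OF \<Phi>0(1) w(1,2) \<Phi>0(2,3)] unfolding \<Phi>_def by blast
  define e' where "e' = e / (\<alpha> + \<beta> + 1)"
  have "0 < e'" "(\<alpha> + \<beta> + 1) * e' = e"
    using \<open>0 < e\<close> w(1,2) by (simp_all add: e'_def)
  have "0 < \<eta> / 2"
    using \<open>0 < \<eta>\<close> by simp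
  obtain f1 f2 z1 where f: "f1 \<in> wstar_nbhd (fst ` F) e' f0 \<inter> dual_ball norm"
    "f2 \<in> wstar_nbhd (fst ` F) e' f0 \<inter> dual_ball norm" "norm z1 \<le> 1"
    "s * (2 - \<eta> / 2) \<le> s * (f1 z1 - f2 z1)"
    using wstar_d2p_scaled_witness[OF dX w(3) f0 finite_imageI \<open>0 < e'\<close> \<open>0 < \<eta> / 2\<close>]
      \<open>finite F\<close> by blast
  obtain g1 g2 z2 where g: "g1 \<in> wstar_nbhd (snd ` F) e' g0 \<inter> dual_ball norm"
    "g2 \<in> wstar_nbhd (snd ` F) e' g0 \<inter> dual_ball norm" "norm z2 \<le> 1"
    "t * (2 - \<eta> / 2) \<le> t * (g1 z2 - g2 z2)"
    using wstar_d2p_scaled_witness[OF dY w(4) g0 finite_imageI \<open>0 < e'\<close> \<open>0 < \<eta> / 2\<close>]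
      \<open>finite F\<close> by blast
  have member: "\<Phi> f g \<in> wstar_nbhd F e \<Phi>0 \<inter> dual_ball N"
    if "f \<in> wstar_nbhd (fst ` F) e' f0 \<inter> dual_ball norm" "g \<in> wstar_nbhd (snd ` F) e' g0 \<inter> dual_ball norm"
    for f g
    using weighted_sum_in_wstar_nbhd[of f F e' f0 g g0 \<alpha> \<beta>] weighted_sum_in_dual_ball[OF _ _ w(1,2) dominated]
      that w(1,2) \<open>(\<alpha> + \<beta> + 1) * e' = e\<close> \<open>\<Phi>0 = \<Phi> f0 g0\<close> by (simp add: \<Phi>_def)
  have "linear f1" "linear f2" "linear g1" "linear g2"
    using f(1,2) g(1,2) by (simp_all add: dual_ball_def)
  then have "\<Phi> f1 g1 (s *\<^sub>R z1, t *\<^sub>R z2) - \<Phi> f2 g2 (s *\<^sub>R z1, t *\<^sub>R z2)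
      = \<alpha> * (s * (f1 z1 - f2 z1)) + \<beta> * (t * (g1 z2 - g2 z2))"
    by (simp add: \<Phi>_def linear_scale algebra_simps)
  also have "\<dots> \<ge> \<alpha> * (s * (2 - \<eta> / 2)) + \<beta> * (t * (2 - \<eta> / 2))"
    by (rule add_mono[OF mult_left_mono[OF f(4) w(1)] mult_left_mono[OF g(4) w(2)]])
  also have "\<alpha> * (s * (2 - \<eta> / 2)) + \<beta> * (t * (2 - \<eta> / 2)) = 2 - \<eta> / 2"
    using w(5) by algebra
  finally have "2 - \<eta> < \<Phi> f1 g1 (s *\<^sub>R z1, t *\<^sub>R z2) - \<Phi> f2 g2 (s *\<^sub>R z1, t *\<^sub>R z2)"
    using \<open>0 < \<eta>\<close> by linarith
  moreover have "N (s *\<^sub>R z1, t *\<^sub>R z2) \<le> 1"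
    using rectangle f(3) g(3) .
  ultimately show ?thesis
    using member[OF f(1) g(1)] member[OF f(2) g(2)] by blast
qed

lemma wstar_d2p_psum_one:
  assumes "wstar_d2p (norm :: 'a::real_normed_vector \<Rightarrow> real)"
  shows "wstar_d2p (psum_norm 1 :: 'a \<times> 'b::real_normed_vector \<Rightarrow> real)"
proof (rule wstar_d2pI)
  show "psum_norm 1 (0 :: 'a \<times> 'b) = 0"
    by (simp add: psum_norm_zero)
  have weights: "norming_weights (psum_norm 1 :: 'a \<times> 'b \<Rightarrow> real) 1 1 1 0"
    by (simp add: norming_weights_def)
  fix \<Phi>0 :: "'a \<times> 'b \<Rightarrow> real" and F :: "('a \<times> 'b) set" and e \<eta> :: real
  assume \<Phi>0: "\<Phi>0 \<in> dual_ball (psum_norm 1)" and "finite F" "0 < e" "0 < \<eta>"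
  moreover have "(\<lambda>x. \<Phi>0 (x, 0)) \<in> dual_ball norm" "(\<lambda>y. \<Phi>0 (0, y)) \<in> dual_ball norm"
    by (rule dual_ball_psum_fst_axis[OF _ \<Phi>0] dual_ball_psum_snd_axis[OF _ \<Phi>0], simp)+
  ultimately show "\<exists>\<Phi>1\<in>wstar_nbhd F e \<Phi>0 \<inter> dual_ball (psum_norm 1).
      \<exists>\<Phi>2\<in>wstar_nbhd F e \<Phi>0 \<inter> dual_ball (psum_norm 1). \<exists>z. psum_norm 1 z \<le> 1 \<and> 2 - \<eta> < \<Phi>1 z - \<Phi>2 z"
    by (intro wstar_d2p_witness_of_norming_weights[OF assms _ weights])
      (simp_all add: dual_ball_def)
qed

lemma weighted_axis_onorms_le:
  fixes \<Phi> :: "'a::real_normed_vector \<times> 'b::real_normed_vector \<Rightarrow> real"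
  assumes "\<Phi> \<in> dual_ball N" "0 \<le> s" "0 \<le> t"
    and rectangle: "\<And>x y. norm x \<le> 1 \<Longrightarrow> norm y \<le> 1 \<Longrightarrow> N (s *\<^sub>R x, t *\<^sub>R y) \<le> c"
  shows "s * onorm (\<lambda>x. \<Phi> (x, 0)) + t * onorm (\<lambda>y. \<Phi> (0, y)) \<le> c"
proof (rule field_le_epsilon)
  fix \<delta> :: real assume "0 < \<delta>"
  have lin: "linear \<Phi>"
    using assms(1) by (simp add: dual_ball_def)
  have bound: "\<Phi> w \<le> N w" for w
  proof -
    have "\<bar>\<Phi> w\<bar> \<le> N w"
      using assms(1) unfolding dual_ball_def by blast
    then show ?thesis
      by linarith
  qed
  define \<delta>' where "\<delta>' = \<delta> / (s + t + 1)"
  have "0 < \<delta>'" "(s + t) * \<delta>' \<le> \<delta>"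
    using \<open>0 < \<delta>\<close> assms(2,3) by (simp_all add: \<delta>'_def field_simps)
  obtain x where x: "norm x \<le> 1" "onorm (\<lambda>x. \<Phi> (x, 0)) - \<delta>' < \<Phi> (x, 0)"
    using exists_unit_gt_onorm_diff[OF linear_on_fst_axis[OF lin] \<open>0 < \<delta>'\<close>] .
  obtain y where y: "norm y \<le> 1" "onorm (\<lambda>y. \<Phi> (0, y)) - \<delta>' < \<Phi> (0, y)"
    using exists_unit_gt_onorm_diff[OF linear_on_snd_axis[OF lin] \<open>0 < \<delta>'\<close>] .
  have "s * (onorm (\<lambda>x. \<Phi> (x, 0)) - \<delta>') + t * (onorm (\<lambda>y. \<Phi> (0, y)) - \<delta>') \<le> s * \<Phi> (x, 0) + t * \<Phi> (0, y)"
    using x(2) y(2) assms(2,3) by (intro add_mono mult_left_mono) simp_all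
  also have "\<dots> = \<Phi> (s *\<^sub>R x, t *\<^sub>R y)"
    using linear_pair_split[OF lin, of "s *\<^sub>R x" "t *\<^sub>R y"]
      linear_scale[OF linear_on_fst_axis[OF lin]] linear_scale[OF linear_on_snd_axis[OF lin]] by simp
  also have "\<dots> \<le> c"
    using bound rectangle[OF x(1) y(1)] by (rule order_trans)
  finally show "s * onorm (\<lambda>x. \<Phi> (x, 0)) + t * onorm (\<lambda>y. \<Phi> (0, y)) \<le> c + \<delta>"
    using \<open>(s + t) * \<delta>' \<le> \<delta>\<close> by (simp add: algebra_simps)
qed

lemma psum_infinity_norming_weights:
  fixes \<Phi> :: "'a::real_normed_vector \<times> 'b::real_normed_vector \<Rightarrow> real"
  assumes "\<Phi> \<in> dual_ball (psum_norm \<infinity>)"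
  obtains \<alpha> \<beta> where "norming_weights (psum_norm \<infinity> :: 'a \<times> 'b \<Rightarrow> real) \<alpha> \<beta> 1 1"
    "onorm (\<lambda>x. \<Phi> (x, 0)) \<le> \<alpha>" "onorm (\<lambda>y. \<Phi> (0, y)) \<le> \<beta>"
proof -
  define a b where "a = onorm (\<lambda>x. \<Phi> (x, 0))" and "b = onorm (\<lambda>y. \<Phi> (0, y))"
  have "0 \<le> a" "0 \<le> b"
    using dual_ball_psum_fst_axis[OF _ assms] dual_ball_psum_snd_axis[OF _ assms]
    by (simp_all add: a_def b_def dual_ball_norm_iff onorm_pos_le)
  have "a + b \<le> 1"
    using weighted_axis_onorms_le[OF assms, of 1 1 1] by (simp add: a_def b_def)
  define c where "c = (1 - a - b) / 2"
  have "norming_weights (psum_norm \<infinity> :: 'a \<times> 'b \<Rightarrow> real) (a + c) (b + c) 1 1"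
    unfolding norming_weights_def
  proof (intro conjI allI impI)
    fix x :: 'a and y :: 'b
    have "(a + c) * norm x + (b + c) * norm y \<le> (a + c) * max (norm x) (norm y) + (b + c) * max (norm x) (norm y)"
      using \<open>0 \<le> a\<close> \<open>0 \<le> b\<close> \<open>a + b \<le> 1\<close> by (intro add_mono mult_left_mono) (auto simp: c_def)
    then show "(a + c) * norm x + (b + c) * norm y \<le> psum_norm \<infinity> (x, y)"
      by (simp add: c_def algebra_simps)
  qed (use \<open>0 \<le> a\<close> \<open>0 \<le> b\<close> \<open>a + b \<le> 1\<close> in \<open>auto simp: c_def\<close>)
  moreover have "a \<le> a + c" "b \<le> b + c"
    using \<open>a + b \<le> 1\<close> by (simp_all add: c_def)
  ultimately show ?thesis
    using that by (simp add: a_def b_def)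
qed

lemma powr_mult_self: "0 \<le> x \<Longrightarrow> x powr a * x = x powr (a + 1)"
  for x a :: real
  by (simp add: powr_add)

lemma holder_two_terms:
  fixes r s t u v :: real
  assumes "1 < r" "0 \<le> s" "0 \<le> t" "s powr r + t powr r = 1" "0 \<le> u" "0 \<le> v"
  shows "s powr (r - 1) * u + t powr (r - 1) * v \<le> (u powr r + v powr r) powr (1 / r)"
proof -
  define R where "R = (u powr r + v powr r) powr (1 / r)"
  show ?thesis
  proof (cases "R = 0")
    case True
    then have "u = 0" "v = 0"
      using assms(5,6) by (auto simp: R_def add_nonneg_eq_0_iff)
    then show ?thesis
      using True by simp
  next
    case False
    then have "0 < R"
      by (simp add: R_def)
    define q where "q = r / (r - 1)"
    have "1 < q" "1 / r + 1 / q = 1"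
      using assms(1) by (simp_all add: q_def field_simps)
    have young: "w powr (r - 1) * (z / R) \<le> w powr r / q + (z / R) powr r / r"
      if "0 \<le> w" "0 \<le> z" for w z
    proof -
      have "(w powr (r - 1)) powr q = w powr r"
        using assms(1) by (simp add: powr_powr q_def)
      moreover have "1 / q + 1 / r = 1"
        using \<open>1 / r + 1 / q = 1\<close> by simp
      ultimately show ?thesis
        using Youngs_inequality[of q r "w powr (r - 1)" "z / R"] \<open>1 < q\<close> assms(1) that \<open>0 < R\<close>
        by simp
    qed
    have "(u / R) powr r + (v / R) powr r = 1"
      using \<open>0 < R\<close> assms(1,5,6) False
      by (simp add: R_def powr_divide powr_powr add_divide_distrib[symmetric])
    then have "(u / R) powr r / r + (v / R) powr r / r = 1 / r"
      by (simp add: add_divide_distrib[symmetric])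
    then have "s powr (r - 1) * (u / R) + t powr (r - 1) * (v / R) \<le> (s powr r + t powr r) / q + 1 / r"
      using young[OF assms(2,5)] young[OF assms(3,6)] by (simp add: add_divide_distrib)
    also have "\<dots> = 1"
      using assms(4) \<open>1 / r + 1 / q = 1\<close> by simp
    finally show ?thesis
      using \<open>0 < R\<close> by (simp add: R_def add_divide_distrib[symmetric] divide_le_eq)
  qed
qed

lemma psum_real_axis_onorms_le:
  fixes \<Phi> :: "'a::real_normed_vector \<times> 'b::real_normed_vector \<Rightarrow> real"
  assumes "1 < r" "\<Phi> \<in> dual_ball (psum_norm (ereal r))"
  shows "onorm (\<lambda>x. \<Phi> (x, 0)) powr (r / (r - 1)) + onorm (\<lambda>y. \<Phi> (0, y)) powr (r / (r - 1)) \<le> 1"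
proof -
  define q where "q = r / (r - 1)"
  define a b where "a = onorm (\<lambda>x. \<Phi> (x, 0))" and "b = onorm (\<lambda>y. \<Phi> (0, y))"
  have "1 \<le> ereal r"
    using assms(1) by simp
  have "0 \<le> a" "0 \<le> b"
    using dual_ball_psum_fst_axis[OF \<open>1 \<le> ereal r\<close> assms(2)] dual_ball_psum_snd_axis[OF \<open>1 \<le> ereal r\<close> assms(2)]
    by (simp_all add: a_def b_def dual_ball_norm_iff onorm_pos_le)
  define A B where "A = a powr (1 / (r - 1))" and "B = b powr (1 / (r - 1))"
  have "1 / (r - 1) + 1 = q" "1 / (r - 1) * r = q"
    using assms(1) by (simp_all add: q_def field_simps)
  then have "A * a = a powr q" "B * b = b powr q" "A powr r = a powr q" "B powr r = b powr q"
    using \<open>0 \<le> a\<close> \<open>0 \<le> b\<close> by (simp_all add: A_def B_def powr_mult_self powr_powr)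
  define S where "S = a powr q + b powr q"
  have "S = A * a + B * b"
    by (simp add: S_def \<open>A * a = a powr q\<close> \<open>B * b = b powr q\<close>)
  also have "\<dots> \<le> psum_norm (ereal r) (A, B)"
    unfolding a_def b_def
    by (rule weighted_axis_onorms_le[OF assms(2)])
      (simp_all add: A_def B_def psum_norm_rectangle[OF \<open>1 \<le> ereal r\<close>])
  also have "\<dots> = S powr (1 / r)"
    by (simp add: psum_norm_real A_def B_def S_def \<open>A powr r = a powr q\<close>[unfolded A_def]
        \<open>B powr r = b powr q\<close>[unfolded B_def])
  finally have "S \<le> S powr (1 / r)" .
  moreover have "S powr (1 / r) < S" if "1 < S"
    using powr_less_mono[of "1 / r" 1 S] that assms(1) by simp
  ultimately have "S \<le> 1"
    by (cases "1 < S") auto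
  then show ?thesis
    by (simp add: S_def q_def a_def b_def)
qed

lemma psum_real_norming_weights:
  assumes "1 < r" "0 \<le> a" "0 \<le> b" "a powr (r / (r - 1)) + b powr (r / (r - 1)) \<le> 1"
  obtains \<alpha> \<beta> s t
  where "norming_weights (psum_norm (ereal r) :: 'a::real_normed_vector \<times> 'b::real_normed_vector \<Rightarrow> real) \<alpha> \<beta> s t"
    "a \<le> \<alpha>" "b \<le> \<beta>"
proof -
  define q where "q = r / (r - 1)"
  define c where "c = (1 - a powr q - b powr q) / 2"
  have "0 \<le> c"
    using assms(4) by (simp add: c_def q_def)
  define s t where "s = (a powr q + c) powr (1 / r)" and "t = (b powr q + c) powr (1 / r)"
  have "0 \<le> s" "0 \<le> t"
    by (simp_all add: s_def t_def)
  have "s powr r + t powr r = 1"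
    using assms(1) \<open>0 \<le> c\<close> by (simp add: s_def t_def powr_powr c_def)
  have weight_ge: "w \<le> ((w powr q + c) powr (1 / r)) powr (r - 1)" if "0 \<le> w" for w
  proof -
    have "w = (w powr q) powr ((r - 1) / r)"
      using assms(1) that by (simp add: powr_powr q_def)
    also have "\<dots> \<le> (w powr q + c) powr ((r - 1) / r)"
      using assms(1) \<open>0 \<le> c\<close> by (intro powr_mono2) auto
    also have "\<dots> = ((w powr q + c) powr (1 / r)) powr (r - 1)"
      by (simp add: powr_powr)
    finally show ?thesis .
  qed
  have "norming_weights (psum_norm (ereal r) :: 'a \<times> 'b \<Rightarrow> real) (s powr (r - 1)) (t powr (r - 1)) s t"
    unfolding norming_weights_def
  proof (intro conjI allI impI)
    show "s powr (r - 1) * s + t powr (r - 1) * t = 1"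
      using \<open>s powr r + t powr r = 1\<close> \<open>0 \<le> s\<close> \<open>0 \<le> t\<close> by (simp add: powr_mult_self)
    show "s powr (r - 1) * norm x + t powr (r - 1) * norm y \<le> psum_norm (ereal r) (x, y)"
      for x :: 'a and y :: 'b
      using holder_two_terms[OF assms(1) \<open>0 \<le> s\<close> \<open>0 \<le> t\<close> \<open>s powr r + t powr r = 1\<close>]
      by (simp add: psum_norm_real)
    show "psum_norm (ereal r) (s *\<^sub>R x, t *\<^sub>R y) \<le> 1" if "norm x \<le> 1" "norm y \<le> 1"
      for x :: 'a and y :: 'b
    proof -
      have "psum_norm (ereal r) (s *\<^sub>R x, t *\<^sub>R y) \<le> psum_norm (ereal r) (s, t)"
        by (rule psum_norm_rectangle) (use assms(1) \<open>0 \<le> s\<close> \<open>0 \<le> t\<close> that in auto)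
      also have "\<dots> = 1"
        using \<open>0 \<le> s\<close> \<open>0 \<le> t\<close> \<open>s powr r + t powr r = 1\<close> by (simp add: psum_norm_real)
      finally show ?thesis .
    qed
  qed (use \<open>0 \<le> s\<close> \<open>0 \<le> t\<close> in simp_all)
  moreover have "a \<le> s powr (r - 1)" "b \<le> t powr (r - 1)"
    using weight_ge assms(2,3) by (simp_all add: s_def t_def)
  ultimately show ?thesis
    by (rule that)
qed

lemma psum_norming_weights:
  fixes \<Phi> :: "'a::real_normed_vector \<times> 'b::real_normed_vector \<Rightarrow> real"
  assumes "1 < p" "\<Phi> \<in> dual_ball (psum_norm p)"
  obtains \<alpha> \<beta> s t where "norming_weights (psum_norm p :: 'a \<times> 'b \<Rightarrow> real) \<alpha> \<beta> s t"
    "\<And>x. \<bar>\<Phi> (x, 0)\<bar> \<le> \<alpha> * norm x" "\<And>y. \<bar>\<Phi> (0, y)\<bar> \<le> \<beta> * norm y"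
proof -
  have "1 \<le> p"
    using assms(1) by simp
  have fst: "(\<lambda>x. \<Phi> (x, 0)) \<in> dual_ball norm" and snd: "(\<lambda>y. \<Phi> (0, y)) \<in> dual_ball norm"
    using dual_ball_psum_fst_axis[OF \<open>1 \<le> p\<close> assms(2)] dual_ball_psum_snd_axis[OF \<open>1 \<le> p\<close> assms(2)] .
  obtain \<alpha> \<beta> s t where weights: "norming_weights (psum_norm p :: 'a \<times> 'b \<Rightarrow> real) \<alpha> \<beta> s t"
    and onorms: "onorm (\<lambda>x. \<Phi> (x, 0)) \<le> \<alpha>" "onorm (\<lambda>y. \<Phi> (0, y)) \<le> \<beta>"
  proof (cases p)
    case (real r)
    with assms have "1 < r" "\<Phi> \<in> dual_ball (psum_norm (ereal r))"
      by simp_all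
    moreover have "0 \<le> onorm (\<lambda>x. \<Phi> (x, 0))" "0 \<le> onorm (\<lambda>y. \<Phi> (0, y))"
      using fst snd by (simp_all add: dual_ball_norm_iff onorm_pos_le)
    ultimately show ?thesis
      using psum_real_axis_onorms_le psum_real_norming_weights that real by metis
  next
    case PInf
    then show ?thesis
      using psum_infinity_norming_weights assms(2) that by metis
  qed (use assms(1) in simp)
  show ?thesis
    using weights abs_le_of_onorm_le[OF fst onorms(1)] abs_le_of_onorm_le[OF snd onorms(2)]
    by (rule that)
qed

lemma wstar_d2p_psum:
  assumes "1 < p" "wstar_d2p (norm :: 'a::real_normed_vector \<Rightarrow> real)"
    "wstar_d2p (norm :: 'b::real_normed_vector \<Rightarrow> real)"
  shows "wstar_d2p (psum_norm p :: 'a \<times> 'b \<Rightarrow> real)"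
proof (rule wstar_d2pI)
  show "psum_norm p (0 :: 'a \<times> 'b) = 0"
    using assms(1) by (simp add: psum_norm_zero)
  fix \<Phi>0 :: "'a \<times> 'b \<Rightarrow> real" and F :: "('a \<times> 'b) set" and e \<eta> :: real
  assume \<Phi>0: "\<Phi>0 \<in> dual_ball (psum_norm p)" and "finite F" "0 < e" "0 < \<eta>"
  obtain \<alpha> \<beta> s t where "norming_weights (psum_norm p :: 'a \<times> 'b \<Rightarrow> real) \<alpha> \<beta> s t"
    "\<And>x. \<bar>\<Phi>0 (x, 0)\<bar> \<le> \<alpha> * norm x" "\<And>y. \<bar>\<Phi>0 (0, y)\<bar> \<le> \<beta> * norm y"
    using psum_norming_weights[OF assms(1) \<Phi>0] by blast
  with \<Phi>0 show "\<exists>\<Phi>1\<in>wstar_nbhd F e \<Phi>0 \<inter> dual_ball (psum_norm p).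
      \<exists>\<Phi>2\<in>wstar_nbhd F e \<Phi>0 \<inter> dual_ball (psum_norm p). \<exists>z. psum_norm p z \<le> 1 \<and> 2 - \<eta> < \<Phi>1 z - \<Phi>2 z"
    by (intro wstar_d2p_witness_of_norming_weights[OF assms(2,3)])
      (simp_all add: dual_ball_def \<open>finite F\<close> \<open>0 < e\<close> \<open>0 < \<eta>\<close>)
qed

section \<open>The Hahn--Banach theorem\<close>

text \<open>Graphs of linear functionals on subspaces that are dominated by the norm and take the
  value \<open>norm x0\<close> at \<open>x0\<close>; Zorn's lemma applied to them gives the Hahn--Banach theorem.\<close>

definition norming_graph :: "'a::real_normed_vector \<Rightarrow> ('a \<times> real) set \<Rightarrow> bool" where
  "norming_graph x0 G \<longleftrightarrow>
    subspace G \<and> single_valued G \<and> (\<forall>(x, a)\<in>G. a \<le> norm x) \<and> (x0, norm x0) \<in> G"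

lemma norming_graph_span:
  assumes "x0 \<noteq> 0"
  shows "norming_graph x0 (span {(x0, norm x0)})"
  unfolding norming_graph_def
proof (intro conjI)
  show "single_valued (span {(x0, norm x0)})"
    using assms by (auto simp: span_singleton single_valued_def)
  show "\<forall>(x, a)\<in>span {(x0, norm x0)}. a \<le> norm x"
    by (auto simp: span_singleton intro: mult_right_mono)
qed (simp_all add: span_base)

lemma norming_graph_Union_chain:
  assumes "C \<noteq> {}" "subset.chain {G. norming_graph x0 G} C"
  shows "norming_graph x0 (\<Union>C)"
proof -
  have graphs: "\<And>G. G \<in> C \<Longrightarrow> norming_graph x0 G"
    and chain: "\<And>G H. G \<in> C \<Longrightarrow> H \<in> C \<Longrightarrow> G \<subseteq> H \<or> H \<subseteq> G"
    using assms(2) by (auto simp: subset_chain_def)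
  have common: "\<exists>G\<in>C. u \<in> G \<and> v \<in> G" if "u \<in> \<Union>C" "v \<in> \<Union>C" for u v
    using that chain by blast
  have "subspace (\<Union>C)"
    unfolding subspace_def
  proof (intro conjI ballI allI)
    show "0 \<in> \<Union>C"
      using assms(1) graphs by (auto simp: norming_graph_def subspace_0)
    show "u + v \<in> \<Union>C" if "u \<in> \<Union>C" "v \<in> \<Union>C" for u v
      using common[OF that] graphs by (auto simp: norming_graph_def intro: subspace_add)
    show "c *\<^sub>R u \<in> \<Union>C" if "u \<in> \<Union>C" for u c
      using that graphs by (auto simp: norming_graph_def intro: subspace_scale)
  qed
  moreover have "single_valued (\<Union>C)"
    unfolding single_valued_def
    using common graphs by (metis norming_graph_def single_valued_def)
  moreover have "\<forall>(x, a)\<in>\<Union>C. a \<le> norm x" "(x0, norm x0) \<in> \<Union>C"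
    using assms(1) graphs by (fastforce simp: norming_graph_def)+
  ultimately show ?thesis
    by (simp add: norming_graph_def)
qed

text \<open>Any value \<open>\<gamma>\<close> between the two families of bounds can be assigned to a new direction \<open>z\<close>
  without losing domination by the norm.\<close>

lemma norming_graph_gap:
  assumes "norming_graph x0 G"
  obtains \<gamma> where "\<And>m a. (m, a) \<in> G \<Longrightarrow> a - norm (m - z) \<le> \<gamma>"
    "\<And>m a. (m, a) \<in> G \<Longrightarrow> \<gamma> \<le> norm (m + z) - a"
proof -
  have G: "subspace G" "\<And>m a. (m, a) \<in> G \<Longrightarrow> a \<le> norm m"
    using assms by (auto simp: norming_graph_def)
  have key: "a - norm (m - z) \<le> norm (m' + z) - a'" if "(m, a) \<in> G" "(m', a') \<in> G" for m a m' a'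
  proof -
    have "a + a' \<le> norm (m + m')"
      using G(2) subspace_add[OF G(1) that] by simp
    also have "\<dots> \<le> norm (m - z) + norm (m' + z)"
      using norm_triangle_ineq[of "m - z" "m' + z"] by simp
    finally show ?thesis
      by simp
  qed
  define L where "L = {a - norm (m - z) |m a. (m, a) \<in> G}"
  have "(0, 0) \<in> G"
    using subspace_0[OF G(1)] by (simp add: zero_prod_def)
  then have "L \<noteq> {}"
    by (auto simp: L_def)
  have "bdd_above L"
    unfolding L_def using key[OF _ \<open>(0, 0) \<in> G\<close>] by (intro bdd_aboveI[where M = "norm z"]) auto
  show ?thesis
  proof (rule that[of "Sup L"])
    show "a - norm (m - z) \<le> Sup L" if "(m, a) \<in> G" for m a
      using that \<open>bdd_above L\<close> by (auto simp: L_def intro!: cSup_upper)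
    show "Sup L \<le> norm (m + z) - a" if "(m, a) \<in> G" for m a
      using that \<open>L \<noteq> {}\<close> key by (auto simp: L_def intro!: cSup_least)
  qed
qed

lemma gap_extension_le_norm:
  assumes "subspace G" "(m, a) \<in> G"
    and lower: "\<And>m a. (m, a) \<in> G \<Longrightarrow> a - norm (m - z) \<le> \<gamma>"
    and upper: "\<And>m a. (m, a) \<in> G \<Longrightarrow> \<gamma> \<le> norm (m + z) - a"
    and dominated: "\<And>m a. (m, a) \<in> G \<Longrightarrow> a \<le> norm m"
  shows "a + c * \<gamma> \<le> norm (m + c *\<^sub>R z)"
proof (cases c "0::real" rule: linorder_cases)
  case less
  define d where "d = - c"
  have "0 < d" "(m /\<^sub>R d, a / d) \<in> G"
    using less subspace_scale[OF assms(1,2), of "inverse d"] by (simp_all add: d_def divide_inverse_commute)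
  then have "a / d - \<gamma> \<le> norm (m /\<^sub>R d - z)"
    using lower by fastforce
  then have "d * (a / d - \<gamma>) \<le> d * norm (m /\<^sub>R d - z)"
    using \<open>0 < d\<close> by (simp add: mult_left_mono)
  also have "d * norm (m /\<^sub>R d - z) = norm (d *\<^sub>R (m /\<^sub>R d - z))"
    using \<open>0 < d\<close> by simp
  also have "d *\<^sub>R (m /\<^sub>R d - z) = m + c *\<^sub>R z"
    using \<open>0 < d\<close> by (simp add: d_def scaleR_diff_right)
  finally show ?thesis
    using \<open>0 < d\<close> by (simp add: d_def algebra_simps)
next
  case greater
  have "(m /\<^sub>R c, a / c) \<in> G"
    using subspace_scale[OF assms(1,2), of "inverse c"] by (simp add: divide_inverse_commute)
  then have "a / c + \<gamma> \<le> norm (m /\<^sub>R c + z)"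
    using upper by fastforce
  then have "c * (a / c + \<gamma>) \<le> c * norm (m /\<^sub>R c + z)"
    using greater by (simp add: mult_left_mono)
  also have "c * norm (m /\<^sub>R c + z) = norm (c *\<^sub>R (m /\<^sub>R c + z))"
    using greater by simp
  also have "c *\<^sub>R (m /\<^sub>R c + z) = m + c *\<^sub>R z"
    using greater by (simp add: scaleR_add_right)
  finally show ?thesis
    using greater by (simp add: algebra_simps)
qed (simp add: dominated assms(2))

lemma single_valued_line_extension:
  assumes "subspace G" "single_valued G" "z \<notin> Domain G"
  shows "single_valued {(m + c *\<^sub>R z, a + c * \<gamma>) |m a c. (m, a) \<in> G}"
proof (rule single_valuedI)
  fix x b b' assume "(x, b) \<in> {(m + c *\<^sub>R z, a + c * \<gamma>) |m a c. (m, a) \<in> G}"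
    "(x, b') \<in> {(m + c *\<^sub>R z, a + c * \<gamma>) |m a c. (m, a) \<in> G}"
  then obtain m a c m' a' c' where m: "(m, a) \<in> G" "(m', a') \<in> G"
    and eq: "x = m + c *\<^sub>R z" "b = a + c * \<gamma>" "x = m' + c' *\<^sub>R z" "b' = a' + c' * \<gamma>"
    by blast
  have "(m - m', a - a') \<in> G"
    using subspace_diff[OF assms(1) m] by simp
  have "c = c'"
  proof (rule ccontr)
    assume "c \<noteq> c'"
    have "m - m' = (c' - c) *\<^sub>R z"
      using eq(1,3) by (simp add: algebra_simps)
    then have "z = (m - m') /\<^sub>R (c' - c)"
      using \<open>c \<noteq> c'\<close> by simp
    moreover have "((m - m') /\<^sub>R (c' - c), (a - a') / (c' - c)) \<in> G"
      using subspace_scale[OF assms(1) \<open>(m - m', a - a') \<in> G\<close>, of "inverse (c' - c)"]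
      by (simp add: divide_inverse_commute)
    ultimately show False
      using assms(3) by blast
  qed
  with eq have "m = m'"
    by simp
  with m assms(2) eq \<open>c = c'\<close> show "b = b'"
    by (auto simp: single_valued_def)
qed

lemma norming_graph_extend:
  assumes G: "norming_graph x0 G" and z: "z \<notin> Domain G"
  obtains G' where "norming_graph x0 G'" "G \<subset> G'"
proof -
  have sub: "subspace G" and sv: "single_valued G"
    and dominated: "\<And>m a. (m, a) \<in> G \<Longrightarrow> a \<le> norm m" and x0: "(x0, norm x0) \<in> G"
    using G by (auto simp: norming_graph_def)
  obtain \<gamma> where lower: "\<And>m a. (m, a) \<in> G \<Longrightarrow> a - norm (m - z) \<le> \<gamma>"
    and upper: "\<And>m a. (m, a) \<in> G \<Longrightarrow> \<gamma> \<le> norm (m + z) - a"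
    using norming_graph_gap[OF G, where z = z] by blast
  define G' where "G' = {g + v |g v. g \<in> G \<and> v \<in> span {(z, \<gamma>)}}"
  have G'_eq: "G' = {(m + c *\<^sub>R z, a + c * \<gamma>) |m a c. (m, a) \<in> G}"
    by (force simp: G'_def span_singleton)
  have "subspace G'"
    unfolding G'_def by (rule subspace_sums[OF sub subspace_span])
  moreover have "single_valued G'"
    unfolding G'_eq by (rule single_valued_line_extension[OF sub sv z])
  moreover have "\<forall>(x, b)\<in>G'. b \<le> norm x"
    using gap_extension_le_norm[OF sub _ lower upper dominated] by (auto simp: G'_eq)
  moreover have "G \<subseteq> G'"
    unfolding G'_eq by force
  moreover have "(z, \<gamma>) \<in> G' - G"
    using z subspace_0[OF sub] unfolding G'_eq by (force simp: zero_prod_def)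
  ultimately show ?thesis
    using x0 by (intro that[of G']) (auto simp: norming_graph_def)
qed

theorem hahn_banach_norming:
  fixes x0 :: "'a::real_normed_vector"
  assumes "x0 \<noteq> 0"
  obtains u where "u \<in> dual_ball norm" "u x0 = norm x0"
proof -
  obtain G where G: "norming_graph x0 G" and maximal: "\<And>G'. norming_graph x0 G' \<Longrightarrow> G \<subseteq> G' \<Longrightarrow> G' = G"
    using subset_Zorn_nonempty[of "{G. norming_graph x0 G}"] norming_graph_span[OF assms]
      norming_graph_Union_chain by blast
  have sub: "subspace G" and sv: "single_valued G"
    and dominated: "\<And>m a. (m, a) \<in> G \<Longrightarrow> a \<le> norm m" and x0: "(x0, norm x0) \<in> G"
    using G by (auto simp: norming_graph_def)
  have "x \<in> Domain G" for x
    using norming_graph_extend[OF G, of x] maximal by blast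
  define u where "u x = (THE a. (x, a) \<in> G)" for x
  have u_eq: "u x = a" if "(x, a) \<in> G" for x a
    unfolding u_def using that sv by (auto simp: single_valued_def)
  have graph: "(x, u x) \<in> G" for x
    using \<open>x \<in> Domain G\<close> u_eq by blast
  have "linear u"
  proof (rule linearI)
    show "u (x + y) = u x + u y" for x y
      using u_eq subspace_add[OF sub graph graph] by simp
    show "u (c *\<^sub>R x) = c *\<^sub>R u x" for c x
      using u_eq subspace_scale[OF sub graph] by simp
  qed
  moreover have "\<bar>u x\<bar> \<le> norm x" for x
    using dominated[OF graph, of x] dominated[OF graph, of "- x"] linear_neg[OF \<open>linear u\<close>, of x] by simp
  ultimately show ?thesis
    using u_eq[OF x0] by (intro that[of u]) (simp_all add: dual_ball_def)
qed

lemma obtain_unit_norming_functional: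
  fixes x0 :: "'a::real_normed_vector"
  assumes "x0 \<noteq> 0"
  obtains u x1 where "u \<in> dual_ball norm" "norm (x1 :: 'a) = 1" "u x1 = 1"
proof -
  obtain u where "u \<in> dual_ball norm" "u x0 = norm x0"
    using hahn_banach_norming[OF assms] .
  moreover from this(1) have "u (x0 /\<^sub>R norm x0) = u x0 / norm x0"
    using linear_scale[of u] by (simp add: dual_ball_def divide_inverse_commute)
  ultimately show ?thesis
    using assms by (intro that[of u "x0 /\<^sub>R norm x0"]) simp_all
qed

section \<open>The diameter two property passes from a \<open>p\<close>-sum to its first summand\<close>

lemma psum_norm_le_one_plus_powr:
  assumes "1 < p"
  obtains r where "1 < r"
    "\<And>(x :: 'a::real_normed_vector) (y :: 'b::real_normed_vector) t.
      norm x \<le> 1 \<Longrightarrow> norm y \<le> t \<Longrightarrow> t \<le> 1 \<Longrightarrow> psum_norm p (x, y) \<le> 1 + t powr r"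
proof (cases p)
  case (real r)
  show ?thesis
  proof (rule that)
    show "1 < r"
      using assms real by simp
    fix x :: 'a and y :: 'b and t :: real
    assume "norm x \<le> 1" "norm y \<le> t" "t \<le> 1"
    then have "psum_norm p (x, y) \<le> psum_norm p (1 :: real, t)"
      using assms by (intro psum_norm_mono) auto
    also have "\<dots> = (1 + t powr r) powr (1 / r)"
    proof -
      have "0 \<le> t"
        using norm_ge_zero[of y] \<open>norm y \<le> t\<close> by linarith
      then show ?thesis
        using real by (simp add: psum_norm_real)
    qed
    also have "\<dots> \<le> (1 + t powr r) powr 1"
      using \<open>1 < r\<close> by (intro powr_mono) auto
    finally show "psum_norm p (x, y) \<le> 1 + t powr r"
      by simp
  qed
next
  case PInf
  show ?thesis
  proof (rule that[of 2])
    fix x :: 'a and y :: 'b and t :: real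
    assume "norm x \<le> 1" "norm y \<le> t" "t \<le> 1"
    then have "norm x \<le> 1 + t powr 2" "norm y \<le> 1 + t powr 2"
      using powr_ge_zero[of t 2] by linarith+
    then show "psum_norm p (x, y) \<le> 1 + t powr 2"
      by (simp add: PInf)
  qed simp
qed (use assms in simp)

text \<open>For \<open>p > 1\<close> the unit ball of the \<open>p\<close>-sum is not flat along the axes: a functional
  that almost norms a point of the first axis is uniformly small on the second one.\<close>

lemma psum_snd_axis_small:
  assumes "1 < p" "0 < \<sigma>"
  obtains \<theta> where "0 < \<theta>"
    "\<And>(\<Phi> :: 'a::real_normed_vector \<times> 'b::real_normed_vector \<Rightarrow> real) x y.
      \<Phi> \<in> dual_ball (psum_norm p) \<Longrightarrow> norm x \<le> 1 \<Longrightarrow> 1 - \<theta> < \<Phi> (x, 0) \<Longrightarrow> norm y \<le> 1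
      \<Longrightarrow> \<bar>\<Phi> (0, y)\<bar> \<le> \<sigma>"
proof -
  obtain r where "1 < r"
    and unit: "\<And>(x :: 'a) (y :: 'b) t. norm x \<le> 1 \<Longrightarrow> norm y \<le> t \<Longrightarrow> t \<le> 1 \<Longrightarrow>
      psum_norm p (x, y) \<le> 1 + t powr r"
    using psum_norm_le_one_plus_powr[OF assms(1)] by blast
  define t where "t = min 1 ((\<sigma> / 2) powr (1 / (r - 1)))"
  have "0 < t" "t \<le> 1"
    using assms(2) by (auto simp: t_def)
  have "t powr (r - 1) \<le> ((\<sigma> / 2) powr (1 / (r - 1))) powr (r - 1)"
    using \<open>0 < t\<close> \<open>1 < r\<close> by (intro powr_mono2) (auto simp: t_def)
  also have "\<dots> = \<sigma> / 2"
    using \<open>1 < r\<close> assms(2) by (simp add: powr_powr)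
  finally have "t powr (r - 1) \<le> \<sigma> / 2" .
  show ?thesis
  proof (rule that[of "\<sigma> * t / 2"])
    show "0 < \<sigma> * t / 2"
      using assms(2) \<open>0 < t\<close> by simp
    fix \<Phi> :: "'a \<times> 'b \<Rightarrow> real" and x :: 'a and y :: 'b
    assume \<Phi>: "\<Phi> \<in> dual_ball (psum_norm p)" and x: "norm x \<le> 1" "1 - \<sigma> * t / 2 < \<Phi> (x, 0)"
      and "norm y \<le> 1"
    have lin: "linear \<Phi>" and bound: "\<And>w. \<Phi> w \<le> psum_norm p w"
      using \<Phi> abs_ge_self order_trans unfolding dual_ball_def by blast+
    have upper: "\<Phi> (0, v) < \<sigma>" if "norm v \<le> 1" for v
    proof -
      have "\<Phi> (x, 0) + t * \<Phi> (0, v) = \<Phi> (x, t *\<^sub>R v)"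
        using linear_pair_split[OF lin, of x "t *\<^sub>R v"] linear_scale[OF linear_on_snd_axis[OF lin]] by simp
      also have "\<dots> \<le> 1 + t powr r"
        using bound[of "(x, t *\<^sub>R v)"] unit[OF x(1) _ \<open>t \<le> 1\<close>, of "t *\<^sub>R v"] that \<open>0 < t\<close>
        by (simp add: mult_left_le)
      finally have "t * \<Phi> (0, v) < t * (\<sigma> / 2 + t powr (r - 1))"
        using x(2) \<open>0 < t\<close> powr_mult_self[of t "r - 1"] by (simp add: algebra_simps)
      then show ?thesis
        using \<open>0 < t\<close> \<open>t powr (r - 1) \<le> \<sigma> / 2\<close> by simp
    qed
    show "\<bar>\<Phi> (0, y)\<bar> \<le> \<sigma>"
      using upper[of y] upper[of "- y"] \<open>norm y \<le> 1\<close> linear_neg[OF linear_on_snd_axis[OF lin], of y]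
      by simp
  qed
qed

text \<open>If every functional of the unit ball weak* close to \<open>f0\<close> has norm at most \<open>1 - \<theta>\<close>, then
  a functional that is small on \<open>F\<close> is small everywhere: otherwise the norms of \<open>f0 + c g\<close>
  would cross the gap \<open>(1 - \<theta>, 1]\<close> while \<open>f0 + c g\<close> is still weak* close to \<open>f0\<close>.\<close>

lemma onorm_le_of_wstar_nbhd_small:
  fixes f0 g :: "'a::real_normed_vector \<Rightarrow> real"
  assumes f0: "f0 \<in> dual_ball norm"
    and small: "\<And>f. f \<in> wstar_nbhd F e f0 \<inter> dual_ball norm \<Longrightarrow> onorm f \<le> 1 - \<theta>"
    and "0 < \<theta>" "bounded_linear g" "0 < M" "\<And>x. x \<in> F \<Longrightarrow> \<bar>g x\<bar> \<le> M" "0 < e"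
  shows "onorm g \<le> 4 * M / e"
proof -
  have "bounded_linear f0" "onorm f0 \<le> 1"
    using f0 by (simp_all add: dual_ball_norm_iff)
  define c0 where "c0 = e / (2 * M)"
  have "0 < c0"
    using assms(5,7) by (simp add: c0_def)
  define \<phi> where "\<phi> c = onorm (\<lambda>x. f0 x + c * g x)" for c
  have lin: "bounded_linear (\<lambda>x. f0 x + c * g x)" for c
    by (rule bounded_linear_add[OF \<open>bounded_linear f0\<close> bounded_linear_const_mult[OF assms(4)]])
  have near: "(\<lambda>x. f0 x + c * g x) \<in> wstar_nbhd F e f0" if "0 \<le> c" "c \<le> c0" for c
  proof -
    have "c * \<bar>g x\<bar> < e" if "x \<in> F" for x
    proof -
      have "c * \<bar>g x\<bar> \<le> c0 * M"
        using assms(6)[OF that] \<open>0 \<le> c\<close> \<open>c \<le> c0\<close> by (intro mult_mono) auto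
      also have "\<dots> < e"
        using assms(5,7) by (simp add: c0_def)
      finally show ?thesis .
    qed
    with \<open>0 \<le> c\<close> show ?thesis
      by (simp add: wstar_nbhd_def abs_mult)
  qed
  have "\<phi> 0 \<le> 1 - \<theta>"
    using small[of f0] f0 near[of 0] \<open>0 < c0\<close> by (simp add: \<phi>_def)
  have "\<phi> c0 \<le> 1 - \<theta>"
  proof (rule ccontr)
    assume "\<not> \<phi> c0 \<le> 1 - \<theta>"
    then obtain c where c: "0 \<le> c" "c \<le> c0" "\<phi> c = min (\<phi> c0) 1"
      using IVT'[of \<phi> 0 "min (\<phi> c0) 1" c0] \<open>\<phi> 0 \<le> 1 - \<theta>\<close> \<open>0 < \<theta>\<close> \<open>0 < c0\<close>
        continuous_on_onorm_add_scaled[OF \<open>bounded_linear f0\<close> assms(4)]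
      by (force simp: \<phi>_def)
    then have "(\<lambda>x. f0 x + c * g x) \<in> wstar_nbhd F e f0 \<inter> dual_ball norm"
      using near lin by (simp add: dual_ball_norm_iff \<phi>_def)
    then have "\<phi> c \<le> 1 - \<theta>"
      using small by (simp add: \<phi>_def)
    with c \<open>\<not> \<phi> c0 \<le> 1 - \<theta>\<close> \<open>0 < \<theta>\<close> show False
      by linarith
  qed
  have "c0 * onorm g = onorm (\<lambda>x. (f0 x + c0 * g x) + - f0 x)"
    using onorm_scaleR[OF assms(4), of c0] \<open>0 < c0\<close> by simp
  also have "\<dots> \<le> \<phi> c0 + onorm f0"
    using onorm_triangle[OF lin bounded_linear_minus[OF \<open>bounded_linear f0\<close>]]
    by (simp add: \<phi>_def onorm_neg)
  also have "\<dots> \<le> 2"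
    using \<open>\<phi> c0 \<le> 1 - \<theta>\<close> \<open>onorm f0 \<le> 1\<close> \<open>0 < \<theta>\<close> by linarith
  finally show ?thesis
    using \<open>0 < c0\<close> assms(5,7) by (simp add: c0_def field_simps)
qed

lemma psum_fst_axis_far_apart:
  assumes "1 \<le> p" "\<Phi>1 \<in> dual_ball (psum_norm p)" "\<Phi>2 \<in> dual_ball (psum_norm p)"
    and "psum_norm p (x, y) \<le> 1"
    and "\<And>v. norm v \<le> 1 \<Longrightarrow> \<bar>\<Phi>1 (0, v)\<bar> \<le> \<sigma>" "\<And>v. norm v \<le> 1 \<Longrightarrow> \<bar>\<Phi>2 (0, v)\<bar> \<le> \<sigma>"
  shows "norm x \<le> 1" "\<Phi>1 (x, y) - \<Phi>2 (x, y) - 2 * \<sigma> \<le> \<Phi>1 (x, 0) - \<Phi>2 (x, 0)"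
proof -
  show "norm x \<le> 1"
    using norm_le_psum_norm[OF assms(1), of x y] assms(4) by linarith
  have "norm y \<le> 1"
    using norm_le_psum_norm'[OF assms(1), of y x] assms(4) by linarith
  moreover have "linear \<Phi>1" "linear \<Phi>2"
    using assms(2,3) by (simp_all add: dual_ball_def)
  ultimately show "\<Phi>1 (x, y) - \<Phi>2 (x, y) - 2 * \<sigma> \<le> \<Phi>1 (x, 0) - \<Phi>2 (x, 0)"
    using assms(5,6)[of y] linear_pair_split[of \<Phi>1 x y] linear_pair_split[of \<Phi>2 x y]
    by (simp add: abs_le_iff)
qed

lemma wstar_nbhd_contains_almost_unit:
  fixes x0 :: "'a::real_normed_vector" and F :: "'a set"
  assumes "1 < p" and d2p: "wstar_d2p (psum_norm p :: 'a \<times> 'b::real_normed_vector \<Rightarrow> real)"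
    and "x0 \<noteq> 0" and f0: "f0 \<in> dual_ball norm" and "finite F" "0 < e" "0 < \<theta>"
  obtains f where "f \<in> wstar_nbhd F e f0 \<inter> dual_ball norm" "1 - \<theta> < onorm f"
proof (rule ccontr)
  assume "\<not> thesis"
  with that have small: "\<And>f. f \<in> wstar_nbhd F e f0 \<inter> dual_ball norm \<Longrightarrow> onorm f \<le> 1 - \<theta>"
    by force
  have "1 \<le> p"
    using assms(1) by simp
  obtain \<theta>1 where "0 < \<theta>1" and axis: "\<And>(\<Phi> :: 'a \<times> 'b \<Rightarrow> real) x y. \<Phi> \<in> dual_ball (psum_norm p) \<Longrightarrow>
      norm x \<le> 1 \<Longrightarrow> 1 - \<theta>1 < \<Phi> (x, 0) \<Longrightarrow> norm y \<le> 1 \<Longrightarrow> \<bar>\<Phi> (0, y)\<bar> \<le> 1 / 4"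
    using psum_snd_axis_small[OF assms(1), of "1 / 4"] by auto
  obtain u and x1 :: 'a where u: "u \<in> dual_ball norm" "norm x1 = 1" "u x1 = 1"
    using obtain_unit_norming_functional[OF \<open>x0 \<noteq> 0\<close>] .
  then have "norm x1 \<le> 1" "u x1 = 1"
    by simp_all
  define \<delta> where "\<delta> = min (e / 32) \<theta>1"
  have "0 < \<delta>" "0 < 2 * \<delta>"
    using \<open>0 < e\<close> \<open>0 < \<theta>1\<close> by (simp_all add: \<delta>_def)
  obtain \<Phi>1 \<Phi>2 :: "'a \<times> 'b \<Rightarrow> real" and z
    where \<Phi>: "\<Phi>1 \<in> wstar_nbhd ((\<lambda>x. (x, 0)) ` insert x1 F) \<delta> (\<lambda>w. u (fst w)) \<inter> dual_ball (psum_norm p)"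
      "\<Phi>2 \<in> wstar_nbhd ((\<lambda>x. (x, 0)) ` insert x1 F) \<delta> (\<lambda>w. u (fst w)) \<inter> dual_ball (psum_norm p)"
      and z: "psum_norm p z \<le> 1" "2 - 1 / 2 < \<Phi>1 z - \<Phi>2 z"
    using wstar_d2pD[OF d2p psum_norm_zero[OF \<open>1 \<le> p\<close>] dual_ball_psum_lift[OF \<open>1 \<le> p\<close> u(1)]
        _ \<open>0 < \<delta>\<close>, of "(\<lambda>x. (x, 0)) ` insert x1 F" "1 / 2"] \<open>finite F\<close> by auto
  have near: "\<bar>\<Phi>1 (x, 0) - u x\<bar> < \<delta>" "\<bar>\<Phi>2 (x, 0) - u x\<bar> < \<delta>" if "x \<in> insert x1 F" for x
    using \<Phi> that by (auto simp: wstar_nbhd_def)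
  have "\<bar>\<Phi>1 (0, y)\<bar> \<le> 1 / 4" "\<bar>\<Phi>2 (0, y)\<bar> \<le> 1 / 4" if "norm y \<le> 1" for y
    using axis[OF _ \<open>norm x1 \<le> 1\<close> _ that] \<Phi> near[of x1] \<open>u x1 = 1\<close>
    by (auto simp: \<delta>_def)
  then have "norm (fst z) \<le> 1"
    and far: "\<Phi>1 z - \<Phi>2 z - 1 / 2 \<le> \<Phi>1 (fst z, 0) - \<Phi>2 (fst z, 0)"
    using psum_fst_axis_far_apart[OF \<open>1 \<le> p\<close>, of \<Phi>1 \<Phi>2 "fst z" "snd z" "1 / 4"] \<Phi> z(1) by auto
  have "bounded_linear (\<lambda>x. \<Phi>1 (x, 0))" "bounded_linear (\<lambda>x. \<Phi>2 (x, 0))"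
    using dual_ball_psum_fst_axis[OF \<open>1 \<le> p\<close>] \<Phi> by (auto simp: dual_ball_norm_iff)
  then have diff: "bounded_linear (\<lambda>x. \<Phi>1 (x, 0) - \<Phi>2 (x, 0))"
    by (rule bounded_linear_sub)
  have bound: "\<bar>\<Phi>1 (x, 0) - \<Phi>2 (x, 0)\<bar> \<le> 2 * \<delta>" if "x \<in> F" for x
    using near[of x] that by auto
  have "onorm (\<lambda>x. \<Phi>1 (x, 0) - \<Phi>2 (x, 0)) \<le> 4 * (2 * \<delta>) / e"
    by (rule onorm_le_of_wstar_nbhd_small[where F = F and e = e, OF f0 small \<open>0 < \<theta>\<close> diff
          \<open>0 < 2 * \<delta>\<close> bound \<open>0 < e\<close>])
  also have "\<dots> \<le> 1 / 4"
    using \<open>0 < e\<close> by (simp add: \<delta>_def field_simps)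
  finally have "onorm (\<lambda>x. \<Phi>1 (x, 0) - \<Phi>2 (x, 0)) \<le> 1 / 4" .
  then have "onorm (\<lambda>x. \<Phi>1 (x, 0) - \<Phi>2 (x, 0)) * norm (fst z) \<le> 1 / 4 * 1"
    using \<open>norm (fst z) \<le> 1\<close> onorm_pos_le[OF diff] by (intro mult_mono) auto
  then have "\<bar>\<Phi>1 (fst z, 0) - \<Phi>2 (fst z, 0)\<bar> \<le> 1 / 4"
    using onorm[OF diff, of "fst z"] by simp
  with far z(2) show False
    by linarith
qed

lemma wstar_d2p_witness_near_almost_unit:
  fixes f0 fs :: "'a::real_normed_vector \<Rightarrow> real" and F :: "'a set"
  assumes "1 < p" and d2p: "wstar_d2p (psum_norm p :: 'a \<times> 'b::real_normed_vector \<Rightarrow> real)"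
    and fs: "fs \<in> wstar_nbhd F e f0 \<inter> dual_ball norm" and "finite F" "0 < \<eta>" "0 < \<theta>"
    and xs: "norm xs \<le> 1" "1 - \<theta> < fs xs"
    and axis: "\<And>(\<Phi> :: 'a \<times> 'b \<Rightarrow> real) x y. \<Phi> \<in> dual_ball (psum_norm p) \<Longrightarrow> norm x \<le> 1 \<Longrightarrow>
      1 - 2 * \<theta> < \<Phi> (x, 0) \<Longrightarrow> norm y \<le> 1 \<Longrightarrow> \<bar>\<Phi> (0, y)\<bar> \<le> \<eta> / 4"
  shows "\<exists>f1\<in>wstar_nbhd F e f0 \<inter> dual_ball norm. \<exists>f2\<in>wstar_nbhd F e f0 \<inter> dual_ball norm.
    \<exists>z. norm z \<le> 1 \<and> 2 - \<eta> < f1 z - f2 z"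
proof -
  have "1 \<le> p"
    using assms(1) by simp
  obtain e1 where "0 < e1" and shrink: "wstar_nbhd F e1 fs \<subseteq> wstar_nbhd F e f0"
    using wstar_nbhd_shrink[of fs F e f0] fs \<open>finite F\<close> by blast
  define e2 where "e2 = min e1 \<theta>"
  have "0 < e2" "e2 \<le> e1" "e2 \<le> \<theta>"
    using \<open>0 < e1\<close> \<open>0 < \<theta>\<close> by (simp_all add: e2_def)
  obtain \<Phi>1 \<Phi>2 :: "'a \<times> 'b \<Rightarrow> real" and z
    where \<Phi>: "\<Phi>1 \<in> wstar_nbhd ((\<lambda>x. (x, 0)) ` insert xs F) e2 (\<lambda>w. fs (fst w)) \<inter> dual_ball (psum_norm p)"
      "\<Phi>2 \<in> wstar_nbhd ((\<lambda>x. (x, 0)) ` insert xs F) e2 (\<lambda>w. fs (fst w)) \<inter> dual_ball (psum_norm p)"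
      and z: "psum_norm p z \<le> 1" "2 - \<eta> / 2 < \<Phi>1 z - \<Phi>2 z"
    using wstar_d2pD[OF d2p psum_norm_zero[OF \<open>1 \<le> p\<close>] dual_ball_psum_lift[OF \<open>1 \<le> p\<close>]
        _ \<open>0 < e2\<close>, of fs "(\<lambda>x. (x, 0)) ` insert xs F" "\<eta> / 2"] fs \<open>finite F\<close> \<open>0 < \<eta>\<close> by auto
  have near: "\<bar>\<Phi>1 (x, 0) - fs x\<bar> < e2" "\<bar>\<Phi>2 (x, 0) - fs x\<bar> < e2" if "x \<in> insert xs F" for x
    using \<Phi> that by (auto simp: wstar_nbhd_def)
  have "\<bar>\<Phi>1 (0, y)\<bar> \<le> \<eta> / 4" "\<bar>\<Phi>2 (0, y)\<bar> \<le> \<eta> / 4" if "norm y \<le> 1" for y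
    using axis[OF _ xs(1) _ that] \<Phi> near[of xs] xs(2) \<open>e2 \<le> \<theta>\<close> by auto
  then have "norm (fst z) \<le> 1"
    and far: "\<Phi>1 z - \<Phi>2 z - 2 * (\<eta> / 4) \<le> \<Phi>1 (fst z, 0) - \<Phi>2 (fst z, 0)"
    using psum_fst_axis_far_apart[OF \<open>1 \<le> p\<close>, of \<Phi>1 \<Phi>2 "fst z" "snd z" "\<eta> / 4"] \<Phi> z(1) by auto
  have "(\<lambda>x. \<Phi>1 (x, 0)) \<in> wstar_nbhd F e1 fs" "(\<lambda>x. \<Phi>2 (x, 0)) \<in> wstar_nbhd F e1 fs"
    using near \<open>e2 \<le> e1\<close> by (fastforce simp: wstar_nbhd_def)+
  then have "(\<lambda>x. \<Phi>1 (x, 0)) \<in> wstar_nbhd F e f0 \<inter> dual_ball norm"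
    "(\<lambda>x. \<Phi>2 (x, 0)) \<in> wstar_nbhd F e f0 \<inter> dual_ball norm"
    using shrink dual_ball_psum_fst_axis[OF \<open>1 \<le> p\<close>] \<Phi> by auto
  moreover have "2 - \<eta> < \<Phi>1 (fst z, 0) - \<Phi>2 (fst z, 0)"
    using far z(2) by linarith
  ultimately show ?thesis
    using \<open>norm (fst z) \<le> 1\<close>
    by (intro bexI[of _ "\<lambda>x. \<Phi>1 (x, 0)"] bexI[of _ "\<lambda>x. \<Phi>2 (x, 0)"] exI[of _ "fst z"]) auto
qed

lemma wstar_d2p_of_psum:
  fixes x0 :: "'a::real_normed_vector"
  assumes "1 < p" "wstar_d2p (psum_norm p :: 'a \<times> 'b::real_normed_vector \<Rightarrow> real)" "x0 \<noteq> 0"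
  shows "wstar_d2p (norm :: 'a \<Rightarrow> real)"
proof (rule wstar_d2pI)
  show "norm (0 :: 'a) = 0"
    by simp
  fix f0 :: "'a \<Rightarrow> real" and F :: "'a set" and e \<eta> :: real
  assume "f0 \<in> dual_ball norm" "finite F" "0 < e" "0 < \<eta>"
  obtain \<theta> where "0 < \<theta>" and axis: "\<And>(\<Phi> :: 'a \<times> 'b \<Rightarrow> real) x y. \<Phi> \<in> dual_ball (psum_norm p) \<Longrightarrow>
      norm x \<le> 1 \<Longrightarrow> 1 - \<theta> < \<Phi> (x, 0) \<Longrightarrow> norm y \<le> 1 \<Longrightarrow> \<bar>\<Phi> (0, y)\<bar> \<le> \<eta> / 4"
    using psum_snd_axis_small[OF assms(1), of "\<eta> / 4"] \<open>0 < \<eta>\<close> by auto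
  obtain fs where fs: "fs \<in> wstar_nbhd F e f0 \<inter> dual_ball norm" "1 - \<theta> / 2 < onorm fs"
    using wstar_nbhd_contains_almost_unit[OF assms \<open>f0 \<in> dual_ball norm\<close> \<open>finite F\<close> \<open>0 < e\<close>, of "\<theta> / 2"]
      \<open>0 < \<theta>\<close> by auto
  obtain xs where "norm xs \<le> 1" "1 - \<theta> / 2 < fs xs"
    using exists_unit_gt_onorm_diff[of fs "onorm fs - (1 - \<theta> / 2)"] fs by (auto simp: dual_ball_def)
  then show "\<exists>f1\<in>wstar_nbhd F e f0 \<inter> dual_ball norm. \<exists>f2\<in>wstar_nbhd F e f0 \<inter> dual_ball norm.
      \<exists>z. norm z \<le> 1 \<and> 2 - \<eta> < f1 z - f2 z"
    using \<open>0 < \<theta>\<close> axis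
    by (intro wstar_d2p_witness_near_almost_unit[OF assms(1,2) fs(1) \<open>finite F\<close> \<open>0 < \<eta>\<close>]) auto
qed

theorem corollary4p7:
  fixes x0 :: "'a::banach" and y0 :: "'b::banach"
  assumes "x0 \<noteq> 0" and "y0 \<noteq> 0"
  shows "(wstar_d2p (norm :: 'a \<Rightarrow> real) \<longrightarrow>
            wstar_d2p (psum_norm 1 :: 'a \<times> 'b \<Rightarrow> real))
       \<and> (\<forall>p::ereal. 1 < p \<and> wstar_d2p (norm :: 'a \<Rightarrow> real) \<and> wstar_d2p (norm :: 'b \<Rightarrow> real)
            \<longrightarrow> wstar_d2p (psum_norm p :: 'a \<times> 'b \<Rightarrow> real))
       \<and> (\<forall>p::ereal. 1 < p \<and> wstar_d2p (psum_norm p :: 'a \<times> 'b \<Rightarrow> real)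
            \<longrightarrow> wstar_d2p (norm :: 'a \<Rightarrow> real))"
  using wstar_d2p_psum_one wstar_d2p_psum wstar_d2p_of_psum[OF _ _ assms(1)] by blast

end
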